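(* Let $F$ be a continuous distribution function on a nonempty set $\mathcal{X} \subseteq \mathbb{R}^p$ with finite mean. For each $n \in \mathbb{N}$, let $\{\boldsymbol{\xi}_i\}_{i=1}^n \subseteq \mathcal{X}$ be support points of $F$ of size $n$ and let $F_n$ be their empirical distribution function. Let $\bm{X} \sim F$ and $\bm{X}_n \sim F_n$. Then $\bm{X}_n \xrightarrow{d} \bm{X}$ as $n \to \infty$.
   Context: For $\bm{Y}, \bm{Y}' \stackrel{i.i.d.}{\sim} F$ and a point set $\{\bm{x}_i\}_{i=1}^n \subseteq \mathcal{X}$ with empirical distribution function (e.d.f.) $F_n$, the energy distance is $E(F,F_n) = \frac{2}{n}\sum_{i=1}^n \mathbb{E}\|\bm{x}_i - \bm{Y}\|_2 - \frac{1}{n^2}\sum_{i=1}^n\sum_{j=1}^n \|\bm{x}_i - \bm{x}_j\|_2 - \mathbb{E}\|\bm{Y}-\bm{Y}'\|_2.$ For fixed $n$, support points of $F$ are a point set $\{\boldsymbol{\xi}_i\}_{i=1}^n$ that minimizes $E(F,F_n)$ over all choices of $\bm{x}_1,\dots,\bm{x}_n \in \mathcal{X}$. *)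

theory Defs
  imports "HOL-Probability.Probability"
begin

definition cdf_vec :: "(real^'p) measure \<Rightarrow> real^'p \<Rightarrow> real" where
  "cdf_vec M t = measure M {x. \<forall>k. x $ k \<le> t $ k}"

definition energy_distance :: "(real^'p) measure \<Rightarrow> nat \<Rightarrow> (nat \<Rightarrow> real^'p) \<Rightarrow> real" where
  "energy_distance M n x =
     2 / real n * (\<Sum>i<n. (\<integral>y. norm (x i - y) \<partial>M))
     - 1 / (real n)^2 * (\<Sum>i<n. \<Sum>j<n. norm (x i - x j))
     - (\<integral>y. (\<integral>y'. norm (y - y') \<partial>M) \<partial>M)"

definition support_points :: "(real^'p) measure \<Rightarrow> (real^'p) set \<Rightarrow> nat \<Rightarrow> (nat \<Rightarrow> real^'p) \<Rightarrow> bool" where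
  "support_points M X n \<xi> \<longleftrightarrow>
     (\<forall>i<n. \<xi> i \<in> X) \<and>
     (\<forall>x. (\<forall>i<n. x i \<in> X) \<longrightarrow> energy_distance M n \<xi> \<le> energy_distance M n x)"

definition empirical_distr :: "nat \<Rightarrow> (nat \<Rightarrow> 'a) \<Rightarrow> 'a measure" where
  "empirical_distr n x = measure_pmf (map_pmf x (pmf_of_set {..<n}))"

definition conv_distr :: "(nat \<Rightarrow> (real^'p) measure) \<Rightarrow> (real^'p) measure \<Rightarrow> bool" where
  "conv_distr Mn M \<longleftrightarrow>
     (\<forall>f :: real^'p \<Rightarrow> real. continuous_on UNIV f \<and> bounded (range f) \<longrightarrow>
        (\<lambda>n. \<integral>x. f x \<partial>(Mn n)) \<longlonglongrightarrow> (\<integral>x. f x \<partial>M))"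

end

theory Submission
  imports Defs
begin

text \<open>Averaging \<open>(1[\<langle>\<theta>, x\<rangle> \<le> r] - 1[\<langle>\<theta>, y\<rangle> \<le> r])\<^sup>2\<close> over Gaussian directions \<open>\<theta>\<close> and
  Lebesgue offsets \<open>r\<close> gives \<open>sqrt (2/pi) \<cdot> \<parallel>x - y\<parallel>\<close>. Hence the energy distance is a
  multiple of the \<open>L\<^sup>2\<close> distance between the distribution functions of the projections
  \<open>\<langle>\<theta>, X\<^sub>n\<rangle>\<close> and \<open>\<langle>\<theta>, X\<rangle>\<close>, jointly in \<open>(\<theta>, r)\<close>. A point set chosen greedily, each point no
  worse than a random draw from \<open>F\<close>, has energy at most \<open>E\<parallel>Y - Y'\<parallel> / n\<close>, so the support
  points have vanishing energy. Vanishing \<open>L\<^sup>2\<close> distance gives convergence of the integrals of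
  the half-space transforms of \<open>L\<^sup>1 \<inter> L\<^sup>2\<close> functions; these include truncated trigonometric
  functions of \<open>\<langle>\<theta>, x\<rangle>\<close> averaged over \<open>\<theta>\<close> and a tightness witness. Smoothing in \<open>\<theta>\<close>,
  tightness and Stone-Weierstrass then extend convergence to all bounded continuous functions.\<close>

section \<open>Gaussian projections\<close>

definition proj :: "('p::finite \<Rightarrow> real) \<Rightarrow> real^'p \<Rightarrow> real" where
  "proj \<theta> x = (\<Sum>k\<in>UNIV. \<theta> k * x$k)"

definition gauss :: "('p::finite \<Rightarrow> real) measure" where
  "gauss = PiM UNIV (\<lambda>_. density lborel std_normal_density)"

lemma proj_zero [simp]: "proj \<theta> 0 = 0"
  by (simp add: proj_def)

lemma proj_diff: "proj \<theta> (x - y) = proj \<theta> x - proj \<theta> y"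
  unfolding proj_def by (simp add: sum_subtractf algebra_simps)

lemma proj_add_dir: "proj (\<lambda>k. s k + t k) x = proj s x + proj t x"
  unfolding proj_def by (simp add: sum.distrib algebra_simps)

lemma proj_uminus_dir: "proj (\<lambda>k. - t k) x = - proj t x"
  unfolding proj_def by (simp add: sum_negf)

lemma abs_proj_le: "\<bar>proj t x\<bar> \<le> (\<Sum>k\<in>UNIV. \<bar>t k\<bar>) * norm x"
proof -
  have "\<bar>proj t x\<bar> \<le> (\<Sum>k\<in>UNIV. \<bar>t k * x$k\<bar>)" unfolding proj_def by (rule sum_abs)
  also have "\<dots> \<le> (\<Sum>k\<in>UNIV. \<bar>t k\<bar> * norm x)"
    by (intro sum_mono) (simp add: abs_mult mult_left_mono component_le_norm_cart)
  finally show ?thesis by (simp add: sum_distrib_right)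
qed

lemma measurable_vec_nth [measurable]: "(\<lambda>x::real^'n::finite. x$k) \<in> borel_measurable borel"
  by (intro borel_measurable_continuous_onI continuous_intros)

lemma measurable_proj [measurable]: "proj t \<in> borel_measurable borel"
  unfolding proj_def by measurable

lemma measurable_proj_gauss [measurable]:
  "(\<lambda>\<theta>. proj \<theta> x) \<in> borel_measurable (gauss :: ('p::finite \<Rightarrow> real) measure)"
  unfolding proj_def gauss_def by measurable

lemma measurable_gauss_component [measurable]:
  "(\<lambda>\<theta>. \<theta> i) \<in> borel_measurable (gauss :: ('p::finite \<Rightarrow> real) measure)"
  unfolding gauss_def by measurable

lemma prob_space_std_normal: "prob_space (density lborel std_normal_density)"
  using prob_space_normal_density[of 1 0] by simp

lemma prob_space_gauss: "prob_space (gauss :: ('p::finite \<Rightarrow> real) measure)"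
  unfolding gauss_def by (intro prob_space_PiM prob_space_std_normal)

lemma sets_gauss: "sets (gauss :: ('p::finite \<Rightarrow> real) measure) = sets (PiM UNIV (\<lambda>_. borel))"
  unfolding gauss_def by (intro sets_PiM_cong) auto

lemma space_gauss [simp]: "space (gauss :: ('p::finite \<Rightarrow> real) measure) = UNIV"
  unfolding gauss_def by (simp add: space_PiM)

lemma distr_gauss_component:
  "distr (gauss :: ('p::finite \<Rightarrow> real) measure) borel (\<lambda>\<theta>. \<theta> i) = density lborel std_normal_density"
proof -
  have "distr (gauss :: ('p \<Rightarrow> real) measure) borel (\<lambda>\<theta>. \<theta> i)
      = distr gauss (density lborel std_normal_density) (\<lambda>\<theta>. \<theta> i)"
    by (rule distr_cong) (auto simp: gauss_def)
  also have "\<dots> = density lborel std_normal_density"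
    unfolding gauss_def by (rule distr_PiM_component) (auto intro: prob_space_std_normal)
  finally show ?thesis .
qed

lemma gauss_components_indep:
  "prob_space.indep_vars (gauss :: ('p::finite \<Rightarrow> real) measure) (\<lambda>_. borel) (\<lambda>i \<theta>. \<theta> i) UNIV"
proof -
  interpret prob_space "gauss :: ('p \<Rightarrow> real) measure" by (rule prob_space_gauss)
  have "distr (gauss :: ('p \<Rightarrow> real) measure) (\<Pi>\<^sub>M i\<in>UNIV. borel) (\<lambda>x. \<lambda>i\<in>UNIV. x i) = gauss"
  proof -
    have "(\<lambda>x::'p\<Rightarrow>real. restrict x UNIV) = (\<lambda>x. x)" by (auto simp: restrict_def)
    then show ?thesis by (simp add: distr_id2 sets_gauss)
  qed
  also have "\<dots> = (\<Pi>\<^sub>M i\<in>UNIV. distr gauss borel (\<lambda>\<theta>. \<theta> i))"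
    unfolding distr_gauss_component by (simp add: gauss_def)
  finally show ?thesis
    by (subst indep_vars_iff_distr_eq_PiM) auto
qed

lemma distributed_gauss_proj:
  fixes z :: "real^'p::finite"
  assumes "z \<noteq> 0"
  shows "distributed (gauss :: ('p \<Rightarrow> real) measure) lborel (\<lambda>\<theta>. proj \<theta> z) (normal_density 0 (norm z))"
proof -
  interpret prob_space "gauss :: ('p \<Rightarrow> real) measure" by (rule prob_space_gauss)
  define I where "I = {i. z$i \<noteq> 0}"
  have I: "finite I" "I \<noteq> {}" using assms by (auto simp: I_def vec_eq_iff)
  have component: "distributed gauss lborel (\<lambda>\<theta>. \<theta> i) (normal_density 0 1)" for i :: 'p
  proof -
    have "distr (gauss :: ('p \<Rightarrow> real) measure) lborel (\<lambda>\<theta>. \<theta> i) = distr gauss borel (\<lambda>\<theta>. \<theta> i)"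
      by (rule distr_cong) auto
    then show ?thesis
      unfolding distributed_def using distr_gauss_component[of i]
      by (auto simp: measurable_cong_sets[OF refl sets_lborel])
  qed
  have indep: "indep_vars (\<lambda>_. borel) (\<lambda>i \<theta>. z$i * \<theta> i) I"
    using indep_vars_compose2[OF indep_vars_subset[OF gauss_components_indep, of I],
        of "\<lambda>i s. z$i * s" "\<lambda>_. borel"]
    by auto
  have scaled: "distributed gauss lborel (\<lambda>\<theta>. z$i * \<theta> i) (normal_density 0 \<bar>z$i\<bar>)" if "i \<in> I" for i
    using normal_density_affine[OF component[of i], of "z$i" 0] that by (auto simp: I_def)
  have "distributed gauss lborel (\<lambda>\<theta>. \<Sum>i\<in>I. z$i * \<theta> i)
      (normal_density (\<Sum>i\<in>I. 0) (sqrt (\<Sum>i\<in>I. \<bar>z$i\<bar>\<^sup>2)))"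
    by (rule sum_indep_normal[OF I indep]) (use scaled in \<open>auto simp: I_def\<close>)
  moreover have "(\<lambda>\<theta>. \<Sum>i\<in>I. z$i * \<theta> i) = (\<lambda>\<theta>. proj \<theta> z)"
    unfolding proj_def by (auto intro!: ext sum.mono_neutral_left simp: I_def mult.commute)
  moreover have "sqrt (\<Sum>i\<in>I. \<bar>z$i\<bar>\<^sup>2) = norm z"
    unfolding norm_vec_def L2_set_def
    by (auto intro!: arg_cong[where f=sqrt] sum.mono_neutral_left simp: I_def)
  ultimately show ?thesis by simp
qed

lemma integral_gauss_proj:
  fixes z :: "real^'p::finite" and g :: "real \<Rightarrow> real"
  assumes "z \<noteq> 0" and [measurable]: "g \<in> borel_measurable borel"
  shows "(\<integral>\<theta>. g (proj \<theta> z) \<partial>(gauss :: ('p \<Rightarrow> real) measure))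
       = (\<integral>u. std_normal_density u * g (norm z * u) \<partial>lborel)"
proof -
  have nz: "norm z > 0" using assms by auto
  have scale: "norm z * normal_density 0 (norm z) (norm z * u) = std_normal_density u" for u
    using nz by (simp add: normal_density_def power_mult_distrib real_sqrt_mult field_simps)
  have "(\<integral>\<theta>. g (proj \<theta> z) \<partial>(gauss :: ('p \<Rightarrow> real) measure))
      = (\<integral>s. normal_density 0 (norm z) s * g s \<partial>lborel)"
    by (rule distributed_integral[OF distributed_gauss_proj[OF assms(1)], symmetric]) auto
  also have "\<dots> = norm z * (\<integral>u. normal_density 0 (norm z) (norm z * u) * g (norm z * u) \<partial>lborel)"
    using lborel_integral_real_affine[of "norm z" "\<lambda>s. normal_density 0 (norm z) s * g s" 0] nz by simp
  also have "\<dots> = (\<integral>u. std_normal_density u * g (norm z * u) \<partial>lborel)"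
    by (simp flip: integral_mult_right_zero scale add: mult.assoc)
  finally show ?thesis .
qed

lemma nn_integral_gauss_abs_proj:
  fixes z :: "real^'p::finite"
  shows "(\<integral>\<^sup>+\<theta>. ennreal \<bar>proj \<theta> z\<bar> \<partial>(gauss :: ('p \<Rightarrow> real) measure)) = ennreal (sqrt (2/pi) * norm z)"
proof (cases "z = 0")
  case True
  then show ?thesis by simp
next
  case False
  interpret prob_space "gauss :: ('p \<Rightarrow> real) measure" by (rule prob_space_gauss)
  have "integrable lborel (\<lambda>x. normal_density 0 (norm z) x * \<bar>x\<bar>)"
    using integrable_normal_moment_abs[of "norm z" 0 1] False by simp
  then have int: "integrable (gauss :: ('p \<Rightarrow> real) measure) (\<lambda>\<theta>. \<bar>proj \<theta> z\<bar>)"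
    using distributed_integrable[OF distributed_gauss_proj[OF False], of abs] by auto
  have "(\<integral>\<theta>. \<bar>proj \<theta> z\<bar> \<partial>(gauss :: ('p \<Rightarrow> real) measure))
      = (\<integral>u. std_normal_density u * \<bar>norm z * u\<bar> \<partial>lborel)"
    by (rule integral_gauss_proj[OF False]) auto
  also have "\<dots> = (\<integral>u. norm z * (std_normal_density u * \<bar>u\<bar>^(2*0+1)) \<partial>lborel)"
    by (simp add: abs_mult ac_simps)
  also have "\<dots> = sqrt (2/pi) * norm z"
    using integral_std_normal_moment_abs_odd[of 0] by (simp only: integral_mult_right_zero) simp
  finally show ?thesis
    using nn_integral_eq_integral[OF int] by simp
qed

section \<open>Half-space indicators\<close>

definition halfspace_ind :: "('p::finite \<Rightarrow> real) \<times> real \<Rightarrow> real^'p \<Rightarrow> real" where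
  "halfspace_ind w x = (if proj (fst w) x \<le> snd w then 1 else 0)"

definition proj_measure :: "(('p::finite \<Rightarrow> real) \<times> real) measure" where
  "proj_measure = gauss \<Otimes>\<^sub>M lborel"

lemma halfspace_ind_cases: "halfspace_ind w x = 0 \<or> halfspace_ind w x = 1"
  by (simp add: halfspace_ind_def)

lemma halfspace_ind_nonneg: "0 \<le> halfspace_ind w x"
  and halfspace_ind_le_1: "halfspace_ind w x \<le> 1"
  by (auto simp: halfspace_ind_def)

lemma sigma_finite_proj_measure:
  "sigma_finite_measure (proj_measure :: (('p::finite \<Rightarrow> real) \<times> real) measure)"
  unfolding proj_measure_def
  by (intro sigma_finite_pair_measure prob_space_imp_sigma_finite prob_space_gauss
      lborel.sigma_finite_measure_axioms)

lemma pair_sigma_finite_gauss_lborel: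
  "pair_sigma_finite (gauss :: ('p::finite \<Rightarrow> real) measure) lborel"
  unfolding pair_sigma_finite_def
  using prob_space_gauss prob_space_imp_sigma_finite lborel.sigma_finite_measure_axioms by blast

lemma measurable_halfspace_ind [measurable]:
  "(\<lambda>w. halfspace_ind w x) \<in> borel_measurable (proj_measure :: (('p::finite \<Rightarrow> real) \<times> real) measure)"
  unfolding halfspace_ind_def proj_measure_def by measurable

lemma measurable_halfspace_ind_point [measurable]: "halfspace_ind w \<in> borel_measurable borel"
  unfolding halfspace_ind_def by measurable

lemma measurable_halfspace_ind_pair [measurable]:
  "(\<lambda>(y, w). halfspace_ind w y)
     \<in> borel_measurable (borel \<Otimes>\<^sub>M (proj_measure :: (('p::finite \<Rightarrow> real) \<times> real) measure))"
proof -
  have "(\<lambda>(y::real^'p, \<theta>::'p \<Rightarrow> real, r::real). proj \<theta> y) \<in> borel_measurable (borel \<Otimes>\<^sub>M (gauss \<Otimes>\<^sub>M lborel))"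
    unfolding proj_def by measurable
  then show ?thesis
    unfolding halfspace_ind_def proj_measure_def by (simp add: split_beta') measurable
qed

lemma nn_integral_halfspace_ind_diff_sq:
  fixes x y :: "real^'p::finite"
  shows "(\<integral>\<^sup>+w. ennreal ((halfspace_ind w x - halfspace_ind w y)\<^sup>2) \<partial>proj_measure)
     = ennreal (sqrt (2/pi) * norm (x - y))"
proof -
  have "(\<integral>\<^sup>+w. ennreal ((halfspace_ind w x - halfspace_ind w y)\<^sup>2) \<partial>proj_measure)
      = (\<integral>\<^sup>+\<theta>. \<integral>\<^sup>+r. ennreal ((halfspace_ind (\<theta>, r) x - halfspace_ind (\<theta>, r) y)\<^sup>2) \<partial>lborel \<partial>gauss)"
    unfolding proj_measure_def
    by (rule lborel.nn_integral_fst[symmetric]) (unfold halfspace_ind_def, measurable)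
  also have "\<dots> = (\<integral>\<^sup>+\<theta>. ennreal \<bar>proj \<theta> (x - y)\<bar> \<partial>gauss)"
  proof (intro nn_integral_cong)
    fix \<theta> :: "'p \<Rightarrow> real"
    have "(\<lambda>r. ennreal ((halfspace_ind (\<theta>, r) x - halfspace_ind (\<theta>, r) y)\<^sup>2))
        = indicator {min (proj \<theta> x) (proj \<theta> y)..<max (proj \<theta> x) (proj \<theta> y)}"
      by (auto simp: halfspace_ind_def indicator_def fun_eq_iff)
    then show "(\<integral>\<^sup>+r. ennreal ((halfspace_ind (\<theta>, r) x - halfspace_ind (\<theta>, r) y)\<^sup>2) \<partial>lborel)
        = ennreal \<bar>proj \<theta> (x - y)\<bar>"
      by (simp add: proj_diff)
  qed
  also have "\<dots> = ennreal (sqrt (2/pi) * norm (x - y))"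
    by (rule nn_integral_gauss_abs_proj)
  finally show ?thesis .
qed

lemma integral_halfspace_ind_diff_sq:
  fixes x y :: "real^'p::finite"
  shows "integrable proj_measure (\<lambda>w. (halfspace_ind w x - halfspace_ind w y)\<^sup>2)"
    and "(\<integral>w. (halfspace_ind w x - halfspace_ind w y)\<^sup>2 \<partial>proj_measure) = sqrt (2/pi) * norm (x - y)"
  using nn_integral_halfspace_ind_diff_sq[of x y]
  by (subst (asm) nn_integral_eq_integrable; simp)+

section \<open>Energy distance as an \<open>L\<^sup>2\<close> distance of projected distribution functions\<close>

definition emp_proj_cdf :: "nat \<Rightarrow> (nat \<Rightarrow> real^'p::finite) \<Rightarrow> ('p \<Rightarrow> real) \<times> real \<Rightarrow> real" where
  "emp_proj_cdf n x w = (\<Sum>i<n. halfspace_ind w (x i)) / real n"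

lemma emp_proj_cdf_bounds:
  assumes "n \<ge> 1"
  shows "0 \<le> emp_proj_cdf n x w" "emp_proj_cdf n x w \<le> 1"
proof -
  have "(\<Sum>i<n. halfspace_ind w (x i)) \<le> (\<Sum>i<n. 1)"
    by (intro sum_mono halfspace_ind_le_1)
  then show "emp_proj_cdf n x w \<le> 1"
    using assms by (simp add: emp_proj_cdf_def divide_le_eq)
  show "0 \<le> emp_proj_cdf n x w"
    unfolding emp_proj_cdf_def by (intro divide_nonneg_nonneg sum_nonneg halfspace_ind_nonneg) auto
qed

lemma energy_combination_eq_square:
  fixes a :: "nat \<Rightarrow> real" and g :: real
  assumes "n \<ge> 1" "\<And>i. a i = 0 \<or> a i = 1"
  shows "2 / real n * (\<Sum>i<n. a i + g - 2 * a i * g) - 1 / (real n)\<^sup>2 * (\<Sum>i<n. \<Sum>j<n. (a i - a j)\<^sup>2)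
       - 2 * g * (1 - g) = 2 * ((\<Sum>i<n. a i) / real n - g)\<^sup>2"
proof -
  define S where "S = (\<Sum>i<n. a i)"
  have idem: "a i * a i = a i" for i using assms(2)[of i] by auto
  have lin: "(\<Sum>i<n. a i + g - 2 * a i * g) = S + n * g - 2 * S * g"
    by (simp add: S_def sum.distrib sum_subtractf sum_distrib_right sum_distrib_left mult.assoc)
  have "(\<Sum>i<n. \<Sum>j<n. (a i - a j)\<^sup>2) = (\<Sum>i<n. \<Sum>j<n. a i + a j - 2 * (a i * a j))"
    by (simp add: power2_eq_square algebra_simps idem)
  also have "\<dots> = (\<Sum>i<n. \<Sum>j<n. a i) + (\<Sum>i<n. \<Sum>j<n. a j) - 2 * (\<Sum>i<n. \<Sum>j<n. a i * a j)"
    by (simp add: sum.distrib sum_subtractf sum_distrib_left)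
  also have "\<dots> = 2 * n * S - 2 * S * S"
    by (simp add: S_def sum_product flip: sum_distrib_left)
  finally have quad: "(\<Sum>i<n. \<Sum>j<n. (a i - a j)\<^sup>2) = 2 * n * S - 2 * S * S" .
  show ?thesis unfolding lin quad S_def[symmetric] using assms(1)
    by (simp add: field_simps power2_eq_square)
qed

locale finite_mean_distribution =
  fixes M :: "(real^'p::finite) measure"
  assumes prob_space_M: "prob_space M"
    and sets_M [measurable_cong]: "sets M = sets borel"
    and integrable_norm: "integrable M norm"
begin

sublocale prob_space M by (rule prob_space_M)

definition mean_dist :: "real^'p \<Rightarrow> real" where
  "mean_dist x = (\<integral>y. norm (x - y) \<partial>M)"

definition mean_pair_dist :: real where
  "mean_pair_dist = (\<integral>y. mean_dist y \<partial>M)"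

definition proj_cdf :: "('p \<Rightarrow> real) \<times> real \<Rightarrow> real" where
  "proj_cdf w = (\<integral>y. halfspace_ind w y \<partial>M)"

lemma measurable_halfspace_ind_M [measurable]:
  "(\<lambda>(y, w). halfspace_ind w y) \<in> borel_measurable (M \<Otimes>\<^sub>M (proj_measure :: (('p \<Rightarrow> real) \<times> real) measure))"
  by (subst measurable_cong_sets[OF sets_pair_measure_cong[OF sets_M refl] refl])
    (rule measurable_halfspace_ind_pair)

lemma measurable_mean_dist [measurable]: "mean_dist \<in> borel_measurable M"
  unfolding mean_dist_def by measurable

lemma measurable_proj_cdf [measurable]:
  "proj_cdf \<in> borel_measurable (proj_measure :: (('p \<Rightarrow> real) \<times> real) measure)"
proof -
  have "(\<lambda>(w, y). halfspace_ind w y) \<in> borel_measurable (proj_measure \<Otimes>\<^sub>M M)"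
    using measurable_pair_swap[OF measurable_halfspace_ind_M] by (simp add: split_beta')
  then show ?thesis unfolding proj_cdf_def by measurable
qed

lemma pair_sigma_finite_M_proj_measure:
  "pair_sigma_finite M (proj_measure :: (('p \<Rightarrow> real) \<times> real) measure)"
  unfolding pair_sigma_finite_def
  using sigma_finite_proj_measure prob_space_imp_sigma_finite prob_space_M by blast

lemma integrable_dist: "integrable M (\<lambda>y. norm (x - y))"
proof (rule Bochner_Integration.integrable_bound)
  show "integrable M (\<lambda>y. norm x + norm y)"
    using integrable_norm by (intro Bochner_Integration.integrable_add) auto
  show "AE y in M. norm (norm (x - y)) \<le> norm (norm x + norm y)"
    by (auto intro!: AE_I2 norm_triangle_ineq4)
qed measurable

lemma mean_dist_nonneg: "0 \<le> mean_dist x"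
  unfolding mean_dist_def by (simp add: integral_nonneg)

lemma integrable_mean_dist: "integrable M mean_dist"
proof (rule Bochner_Integration.integrable_bound)
  show "integrable M (\<lambda>y. norm y + (\<integral>y. norm y \<partial>M))"
    using integrable_norm by (intro Bochner_Integration.integrable_add) auto
  have "mean_dist x \<le> (\<integral>y. norm x + norm y \<partial>M)" for x
    unfolding mean_dist_def using integrable_norm
    by (intro integral_mono integrable_dist) (auto intro: norm_triangle_ineq4)
  then show "AE y in M. norm (mean_dist y) \<le> norm (norm y + (\<integral>y. norm y \<partial>M))"
    using integrable_norm by (auto intro!: AE_I2 simp: mean_dist_nonneg prob_space integral_nonneg)
qed simp

lemma mean_pair_dist_nonneg: "0 \<le> mean_pair_dist"
  unfolding mean_pair_dist_def by (simp add: mean_dist_nonneg integral_nonneg)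

lemma integrable_halfspace_ind: "integrable M (halfspace_ind w)"
  by (rule integrable_const_bound[where B=1]) (auto simp: halfspace_ind_def)

lemma proj_cdf_nonneg: "0 \<le> proj_cdf w"
  and proj_cdf_le_1: "proj_cdf w \<le> 1"
proof -
  show "0 \<le> proj_cdf w" unfolding proj_cdf_def by (simp add: halfspace_ind_nonneg integral_nonneg)
  have "proj_cdf w \<le> (\<integral>y. 1 \<partial>M)" unfolding proj_cdf_def
    by (intro integral_mono integrable_halfspace_ind) (auto simp: halfspace_ind_le_1)
  then show "proj_cdf w \<le> 1" by (simp add: prob_space)
qed

lemma integral_halfspace_ind_diff_sq_M:
  "(\<integral>y. (halfspace_ind w x - halfspace_ind w y)\<^sup>2 \<partial>M)
     = halfspace_ind w x + proj_cdf w - 2 * halfspace_ind w x * proj_cdf w"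
proof -
  have sq: "(halfspace_ind w x - halfspace_ind w y)\<^sup>2
      = halfspace_ind w x + (1 - 2 * halfspace_ind w x) * halfspace_ind w y" for y
    by (simp add: halfspace_ind_def power2_eq_square)
  show ?thesis
    unfolding sq using integrable_halfspace_ind[of w]
    by (simp add: proj_cdf_def prob_space algebra_simps)
qed

lemma halfspace_mean_sq_nonneg:
  "0 \<le> halfspace_ind w x + proj_cdf w - 2 * halfspace_ind w x * proj_cdf w"
  using halfspace_ind_cases[of w x] proj_cdf_nonneg[of w] proj_cdf_le_1[of w] by auto

lemma integral_halfspace_mean_sq:
  shows "integrable proj_measure
      (\<lambda>w. halfspace_ind w x + proj_cdf w - 2 * halfspace_ind w x * proj_cdf w)"
    and "(\<integral>w. halfspace_ind w x + proj_cdf w - 2 * halfspace_ind w x * proj_cdf w \<partial>proj_measure)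
      = sqrt (2/pi) * mean_dist x"
proof -
  interpret P: pair_sigma_finite M "proj_measure :: (('p \<Rightarrow> real) \<times> real) measure"
    by (rule pair_sigma_finite_M_proj_measure)
  have "(\<integral>\<^sup>+w. ennreal (halfspace_ind w x + proj_cdf w - 2 * halfspace_ind w x * proj_cdf w) \<partial>proj_measure)
      = (\<integral>\<^sup>+w. \<integral>\<^sup>+y. ennreal ((halfspace_ind w x - halfspace_ind w y)\<^sup>2) \<partial>M \<partial>proj_measure)"
  proof (intro nn_integral_cong)
    fix w
    have "integrable M (\<lambda>y. (halfspace_ind w x - halfspace_ind w y)\<^sup>2)"
      by (rule integrable_const_bound[where B=1]) (auto simp: halfspace_ind_def)
    then show "ennreal (halfspace_ind w x + proj_cdf w - 2 * halfspace_ind w x * proj_cdf w)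
        = (\<integral>\<^sup>+y. ennreal ((halfspace_ind w x - halfspace_ind w y)\<^sup>2) \<partial>M)"
      by (subst nn_integral_eq_integral) (auto simp: integral_halfspace_ind_diff_sq_M)
  qed
  also have "\<dots> = (\<integral>\<^sup>+y. \<integral>\<^sup>+w. ennreal ((halfspace_ind w x - halfspace_ind w y)\<^sup>2) \<partial>proj_measure \<partial>M)"
    by (rule P.Fubini[where f="\<lambda>(y, w). ennreal ((halfspace_ind w x - halfspace_ind w y)\<^sup>2)", simplified])
      measurable
  also have "\<dots> = (\<integral>\<^sup>+y. ennreal (sqrt (2/pi) * norm (x - y)) \<partial>M)"
    by (simp add: nn_integral_halfspace_ind_diff_sq)
  also have "\<dots> = ennreal (sqrt (2/pi) * mean_dist x)"
    unfolding mean_dist_def using integrable_dist[of x] by (subst nn_integral_eq_integral) auto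
  finally have "integrable proj_measure
      (\<lambda>w. halfspace_ind w x + proj_cdf w - 2 * halfspace_ind w x * proj_cdf w) \<and>
    (\<integral>w. halfspace_ind w x + proj_cdf w - 2 * halfspace_ind w x * proj_cdf w \<partial>proj_measure)
      = sqrt (2/pi) * mean_dist x"
    by (subst (asm) nn_integral_eq_integrable) (auto intro!: AE_I2 halfspace_mean_sq_nonneg[simplified] mult_nonneg_nonneg mean_dist_nonneg)
  then show "integrable proj_measure
      (\<lambda>w. halfspace_ind w x + proj_cdf w - 2 * halfspace_ind w x * proj_cdf w)"
    and "(\<integral>w. halfspace_ind w x + proj_cdf w - 2 * halfspace_ind w x * proj_cdf w \<partial>proj_measure)
      = sqrt (2/pi) * mean_dist x"
    by auto
qed

lemma integral_proj_cdf_variance: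
  shows "integrable proj_measure (\<lambda>w. 2 * proj_cdf w * (1 - proj_cdf w))"
    and "(\<integral>w. 2 * proj_cdf w * (1 - proj_cdf w) \<partial>proj_measure) = sqrt (2/pi) * mean_pair_dist"
proof -
  interpret P: pair_sigma_finite M "proj_measure :: (('p \<Rightarrow> real) \<times> real) measure"
    by (rule pair_sigma_finite_M_proj_measure)
  define h where "h y w = halfspace_ind w y + proj_cdf w - 2 * halfspace_ind w y * proj_cdf w" for y w
  have h_nonneg: "0 \<le> h y w" for y w
    unfolding h_def by (rule halfspace_mean_sq_nonneg)
  have "(\<integral>\<^sup>+w. ennreal (2 * proj_cdf w * (1 - proj_cdf w)) \<partial>proj_measure)
      = (\<integral>\<^sup>+w. \<integral>\<^sup>+y. ennreal (h y w) \<partial>M \<partial>proj_measure)"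
  proof (intro nn_integral_cong)
    fix w
    have "integrable M (\<lambda>y. h y w)"
      unfolding h_def using integrable_halfspace_ind[of w] by auto
    moreover have "(\<integral>y. h y w \<partial>M) = 2 * proj_cdf w * (1 - proj_cdf w)"
      unfolding h_def using integrable_halfspace_ind[of w]
      by (simp add: proj_cdf_def[symmetric] prob_space algebra_simps)
    ultimately show "ennreal (2 * proj_cdf w * (1 - proj_cdf w)) = (\<integral>\<^sup>+y. ennreal (h y w) \<partial>M)"
      by (subst nn_integral_eq_integral) (auto intro: h_nonneg)
  qed
  also have "\<dots> = (\<integral>\<^sup>+y. \<integral>\<^sup>+w. ennreal (h y w) \<partial>proj_measure \<partial>M)"
    by (rule P.Fubini[where f="\<lambda>(y, w). ennreal (h y w)", simplified]) (unfold h_def, measurable)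
  also have "\<dots> = (\<integral>\<^sup>+y. ennreal (sqrt (2/pi) * mean_dist y) \<partial>M)"
    using integral_halfspace_mean_sq
    unfolding h_def
    by (intro nn_integral_cong) (subst nn_integral_eq_integral; auto intro!: AE_I2 halfspace_mean_sq_nonneg[simplified])
  also have "\<dots> = ennreal (sqrt (2/pi) * mean_pair_dist)"
    unfolding mean_pair_dist_def using integrable_mean_dist mean_dist_nonneg
    by (subst nn_integral_eq_integral) auto
  finally show "integrable proj_measure (\<lambda>w. 2 * proj_cdf w * (1 - proj_cdf w))"
    and "(\<integral>w. 2 * proj_cdf w * (1 - proj_cdf w) \<partial>proj_measure) = sqrt (2/pi) * mean_pair_dist"
    using proj_cdf_nonneg proj_cdf_le_1
    by (subst (asm) nn_integral_eq_integrable; simp add: mean_pair_dist_nonneg)+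
qed

theorem energy_distance_eq_integral_proj_cdf:
  assumes n: "n \<ge> 1"
  shows "integrable proj_measure (\<lambda>w. (emp_proj_cdf n x w - proj_cdf w)\<^sup>2)"
    and "sqrt (2/pi) * energy_distance M n x
       = 2 * (\<integral>w. (emp_proj_cdf n x w - proj_cdf w)\<^sup>2 \<partial>proj_measure)"
proof -
  define F where "F w = 2 / real n * (\<Sum>i<n. halfspace_ind w (x i) + proj_cdf w
      - 2 * halfspace_ind w (x i) * proj_cdf w)
    - 1 / (real n)\<^sup>2 * (\<Sum>i<n. \<Sum>j<n. (halfspace_ind w (x i) - halfspace_ind w (x j))\<^sup>2)
    - 2 * proj_cdf w * (1 - proj_cdf w)" for w
  have F_eq: "F w = 2 * (emp_proj_cdf n x w - proj_cdf w)\<^sup>2" for w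
    unfolding F_def emp_proj_cdf_def
    by (intro energy_combination_eq_square[OF n] halfspace_ind_cases)
  note integrable =
    integral_halfspace_mean_sq(1) integral_halfspace_ind_diff_sq(1) integral_proj_cdf_variance(1)
  have "integrable proj_measure F"
    unfolding F_def by (intro integrable Bochner_Integration.integrable_diff
      integrable_mult_right Bochner_Integration.integrable_sum)
  then show "integrable proj_measure (\<lambda>w. (emp_proj_cdf n x w - proj_cdf w)\<^sup>2)"
    unfolding F_eq by simp
  have "(\<integral>w. F w \<partial>proj_measure) = 2 / real n * (\<Sum>i<n. sqrt (2/pi) * mean_dist (x i))
      - 1 / (real n)\<^sup>2 * (\<Sum>i<n. \<Sum>j<n. sqrt (2/pi) * norm (x i - x j))
      - sqrt (2/pi) * mean_pair_dist"
    unfolding F_def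
    by (simp add: Bochner_Integration.integral_diff Bochner_Integration.integral_sum
      Bochner_Integration.integrable_diff integrable_mult_right Bochner_Integration.integrable_sum
      integral_halfspace_mean_sq integral_halfspace_ind_diff_sq integral_proj_cdf_variance)
  also have "\<dots> = sqrt (2/pi) * energy_distance M n x"
    unfolding energy_distance_def mean_dist_def mean_pair_dist_def
    by (simp add: sum_distrib_left[symmetric] algebra_simps)
  finally show "sqrt (2/pi) * energy_distance M n x
       = 2 * (\<integral>w. (emp_proj_cdf n x w - proj_cdf w)\<^sup>2 \<partial>proj_measure)"
    unfolding F_eq by simp
qed

lemma energy_distance_nonneg:
  assumes "n \<ge> 1"
  shows "0 \<le> energy_distance M n x"
proof -
  have "0 \<le> sqrt (2/pi) * energy_distance M n x"
    using energy_distance_eq_integral_proj_cdf(2)[OF assms] by (simp add: integral_nonneg)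
  then show ?thesis
    using pi_gt_zero by (simp add: zero_le_mult_iff)
qed

end

section \<open>Support points have energy distance at most \<open>mean_pair_dist / n\<close>\<close>

context finite_mean_distribution
begin

lemma exists_le_of_integral_nonpos:
  fixes f :: "real^'p \<Rightarrow> real"
  assumes "integrable M f" "AE y in M. y \<in> X" "integral\<^sup>L M f \<le> 0"
  shows "\<exists>y\<in>X. f y \<le> 0"
proof (rule ccontr)
  assume neg: "\<not> (\<exists>y\<in>X. f y \<le> 0)"
  from assms(2) have "AE y in M. 0 < f y"
    by eventually_elim (use neg in force)
  then have "integral\<^sup>L M (\<lambda>_. 0) < integral\<^sup>L M f"
    using assms(1) by (intro integral_less_AE_space) (auto simp: emeasure_space_1)
  with assms(3) show False by simp
qed

definition dist_sum :: "nat \<Rightarrow> (nat \<Rightarrow> real^'p) \<Rightarrow> real" where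
  "dist_sum k x = (\<Sum>i<k. mean_dist (x i))"

definition pair_dist_sum :: "nat \<Rightarrow> (nat \<Rightarrow> real^'p) \<Rightarrow> real" where
  "pair_dist_sum k x = (\<Sum>i<k. \<Sum>j<k. norm (x i - x j))"

text \<open>\<open>n\<^sup>2 (energy_distance M n x + mean_pair_dist)\<close>, averaged over the last \<open>n - k\<close> points
  drawn independently from \<open>M\<close>.\<close>

definition greedy_potential :: "nat \<Rightarrow> nat \<Rightarrow> (nat \<Rightarrow> real^'p) \<Rightarrow> real" where
  "greedy_potential n k x = 2 * n * dist_sum k x - pair_dist_sum k x
     + 2 * (real n - k) * n * mean_pair_dist - 2 * (real n - k) * dist_sum k x
     - (real n - k) * (real n - k - 1) * mean_pair_dist"

lemma dist_sum_upd: "dist_sum (Suc k) (x(k := y)) = dist_sum k x + mean_dist y"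
proof -
  have "(\<Sum>i<k. mean_dist ((x(k := y)) i)) = (\<Sum>i<k. mean_dist (x i))" by (intro sum.cong) auto
  then show ?thesis unfolding dist_sum_def by simp
qed

lemma pair_dist_sum_upd:
  "pair_dist_sum (Suc k) (x(k := y)) = pair_dist_sum k x + 2 * (\<Sum>i<k. norm (x i - y))"
proof -
  let ?x = "x(k := y)"
  have old: "(\<Sum>j<Suc k. norm (?x i - ?x j)) = (\<Sum>j<k. norm (x i - x j)) + norm (x i - y)"
    if "i < k" for i
  proof -
    have "(\<Sum>j<k. norm (?x i - ?x j)) = (\<Sum>j<k. norm (x i - x j))" using that by (intro sum.cong) auto
    then show ?thesis using that by simp
  qed
  have new: "(\<Sum>j<Suc k. norm (?x k - ?x j)) = (\<Sum>j<k. norm (x j - y))"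
  proof -
    have "(\<Sum>j<k. norm (?x k - ?x j)) = (\<Sum>j<k. norm (x j - y))"
      by (intro sum.cong) (auto simp: norm_minus_commute)
    then show ?thesis by simp
  qed
  have "pair_dist_sum (Suc k) ?x
      = (\<Sum>i<k. \<Sum>j<Suc k. norm (?x i - ?x j)) + (\<Sum>j<Suc k. norm (?x k - ?x j))"
    unfolding pair_dist_sum_def by (rule sum.lessThan_Suc)
  also have "\<dots> = (\<Sum>i<k. (\<Sum>j<k. norm (x i - x j)) + norm (x i - y)) + (\<Sum>j<k. norm (x j - y))"
    using old new by simp
  finally show ?thesis
    unfolding pair_dist_sum_def by (simp add: sum.distrib)
qed

definition greedy_increment :: "nat \<Rightarrow> (nat \<Rightarrow> real^'p) \<Rightarrow> real^'p \<Rightarrow> real" where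
  "greedy_increment k x y = 2 * (real k + 1) * mean_dist y - 2 * (\<Sum>i<k. norm (x i - y))
     + 2 * dist_sum k x - 2 * (real k + 1) * mean_pair_dist"

lemma greedy_potential_upd:
  "greedy_potential n (Suc k) (x(k := y)) = greedy_potential n k x + greedy_increment k x y"
  unfolding greedy_potential_def greedy_increment_def dist_sum_upd pair_dist_sum_upd
  by (simp add: algebra_simps)

lemma greedy_increment_integral:
  shows "integrable M (greedy_increment k x)"
    and "(\<integral>y. greedy_increment k x y \<partial>M) = 0"
proof -
  have int_sum: "integrable M (\<lambda>y. \<Sum>i<k. norm (x i - y))"
    by (intro Bochner_Integration.integrable_sum integrable_dist)
  then show "integrable M (greedy_increment k x)"
    unfolding greedy_increment_def using integrable_mean_dist by auto
  have "(\<integral>y. (\<Sum>i<k. norm (x i - y)) \<partial>M) = dist_sum k x"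
    unfolding dist_sum_def mean_dist_def by (intro Bochner_Integration.integral_sum integrable_dist)
  then show "(\<integral>y. greedy_increment k x y \<partial>M) = 0"
    unfolding greedy_increment_def using int_sum integrable_mean_dist
    by (simp add: mean_pair_dist_def prob_space)
qed

lemma exists_point_set_energy_le:
  assumes n: "n \<ge> 1" and X: "AE y in M. y \<in> X"
  shows "\<exists>x. (\<forall>i<n. x i \<in> X) \<and> energy_distance M n x \<le> mean_pair_dist / n"
proof -
  have "\<exists>x. (\<forall>i<k. x i \<in> X) \<and> greedy_potential n k x \<le> (real n)\<^sup>2 * mean_pair_dist + n * mean_pair_dist"
    if "k \<le> n" for k
    using that
  proof (induction k)
    case 0
    then show ?case
      by (auto simp: greedy_potential_def dist_sum_def pair_dist_sum_def power2_eq_square algebra_simps)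
  next
    case (Suc k)
    then obtain x where x: "\<forall>i<k. x i \<in> X"
      "greedy_potential n k x \<le> (real n)\<^sup>2 * mean_pair_dist + n * mean_pair_dist"
      by auto
    obtain y where y: "y \<in> X" "greedy_increment k x y \<le> 0"
      using exists_le_of_integral_nonpos[OF greedy_increment_integral(1)[of k x] X]
        greedy_increment_integral(2)[of k x] by auto
    have "\<forall>i<Suc k. (x(k := y)) i \<in> X" using x y by (auto simp: less_Suc_eq)
    moreover have "greedy_potential n (Suc k) (x(k := y)) \<le> (real n)\<^sup>2 * mean_pair_dist + n * mean_pair_dist"
      using greedy_potential_upd[of n k x y] x(2) y(2) by linarith
    ultimately show ?case by blast
  qed
  then obtain x where x: "\<forall>i<n. x i \<in> X"
    "greedy_potential n n x \<le> (real n)\<^sup>2 * mean_pair_dist + n * mean_pair_dist"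
    by auto
  have "energy_distance M n x = greedy_potential n n x / (real n)\<^sup>2 - mean_pair_dist"
    using n unfolding energy_distance_def greedy_potential_def dist_sum_def pair_dist_sum_def
      mean_dist_def mean_pair_dist_def
    by (simp add: field_simps power2_eq_square sum_distrib_left)
  also have "\<dots> \<le> ((real n)\<^sup>2 * mean_pair_dist + n * mean_pair_dist) / (real n)\<^sup>2 - mean_pair_dist"
    using x(2) by (intro diff_right_mono divide_right_mono) auto
  also have "\<dots> = mean_pair_dist / n"
    using n by (simp add: field_simps power2_eq_square)
  finally show ?thesis using x(1) by blast
qed

lemma support_points_energy_tendsto_0:
  assumes X: "AE y in M. y \<in> X"
    and \<xi>: "\<And>n. n \<ge> 1 \<Longrightarrow> support_points M X n (\<xi> n)"
  shows "(\<lambda>n. energy_distance M n (\<xi> n)) \<longlonglongrightarrow> 0"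
proof (rule tendsto_sandwich[of "\<lambda>_. 0" _ _ "\<lambda>n. mean_pair_dist / real n"])
  have "0 \<le> energy_distance M n (\<xi> n) \<and> energy_distance M n (\<xi> n) \<le> mean_pair_dist / n"
    if n: "n \<ge> 1" for n
  proof -
    obtain x where "\<forall>i<n. x i \<in> X" "energy_distance M n x \<le> mean_pair_dist / n"
      using exists_point_set_energy_le[OF n X] by blast
    then show ?thesis
      using \<xi>[OF n] energy_distance_nonneg[OF n] unfolding support_points_def by fastforce
  qed
  then show "\<forall>\<^sub>F n in sequentially. 0 \<le> energy_distance M n (\<xi> n)"
    and "\<forall>\<^sub>F n in sequentially. energy_distance M n (\<xi> n) \<le> mean_pair_dist / n"
    by (auto simp: eventually_sequentially)
qed (auto intro: lim_const_over_n)

end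

section \<open>Convergence of empirical averages\<close>

lemma abs_integral_mult_le:
  fixes f g :: "'a \<Rightarrow> real"
  assumes "integrable N (\<lambda>x. (f x)\<^sup>2)" "integrable N (\<lambda>x. (g x)\<^sup>2)" "integrable N (\<lambda>x. f x * g x)"
    and e: "0 < e"
  shows "\<bar>\<integral>x. f x * g x \<partial>N\<bar> \<le> (e * (\<integral>x. (f x)\<^sup>2 \<partial>N) + (\<integral>x. (g x)\<^sup>2 \<partial>N) / e) / 2"
proof -
  have pointwise: "\<bar>f x * g x\<bar> \<le> (e * (f x)\<^sup>2 + (g x)\<^sup>2 / e) / 2" for x
  proof -
    have "0 \<le> (e * \<bar>f x\<bar> - \<bar>g x\<bar>)\<^sup>2" by simp
    then have "2 * e * \<bar>f x * g x\<bar> \<le> e\<^sup>2 * (f x)\<^sup>2 + (g x)\<^sup>2"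
      by (simp add: power2_eq_square algebra_simps abs_mult)
    then show ?thesis using e by (simp add: field_simps power2_eq_square)
  qed
  have "\<bar>\<integral>x. f x * g x \<partial>N\<bar> \<le> (\<integral>x. \<bar>f x * g x\<bar> \<partial>N)"
    by (rule integral_abs_bound)
  also have "\<dots> \<le> (\<integral>x. (e * (f x)\<^sup>2 + (g x)\<^sup>2 / e) / 2 \<partial>N)"
    using assms by (intro integral_mono pointwise) auto
  also have "\<dots> = (e * (\<integral>x. (f x)\<^sup>2 \<partial>N) + (\<integral>x. (g x)\<^sup>2 \<partial>N) / e) / 2"
    using assms by simp
  finally show ?thesis .
qed

lemma tendsto_integral_mult_zero:
  fixes f :: "'a \<Rightarrow> real" and g :: "nat \<Rightarrow> 'a \<Rightarrow> real"
  assumes f2: "integrable N (\<lambda>x. (f x)\<^sup>2)"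
    and g2: "\<forall>\<^sub>F n in sequentially. integrable N (\<lambda>x. (g n x)\<^sup>2)"
    and fg: "\<forall>\<^sub>F n in sequentially. integrable N (\<lambda>x. f x * g n x)"
    and lim: "(\<lambda>n. \<integral>x. (g n x)\<^sup>2 \<partial>N) \<longlonglongrightarrow> 0"
  shows "(\<lambda>n. \<integral>x. f x * g n x \<partial>N) \<longlonglongrightarrow> 0"
proof (rule LIMSEQ_I)
  fix e :: real
  assume e: "0 < e"
  define A where "A = (\<integral>x. (f x)\<^sup>2 \<partial>N)"
  have A: "0 \<le> A" unfolding A_def by (simp add: integral_nonneg)
  define \<delta> where "\<delta> = e / (A + 1)"
  have \<delta>: "0 < \<delta>" "\<delta> * A < e"
    using e A by (auto simp: \<delta>_def field_simps)
  have "\<forall>\<^sub>F n in sequentially. (\<integral>x. (g n x)\<^sup>2 \<partial>N) < e * \<delta>"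
    using lim e \<delta> by (simp add: order_tendsto_iff)
  with g2 fg have "\<forall>\<^sub>F n in sequentially. norm (\<integral>x. f x * g n x \<partial>N) < e"
  proof eventually_elim
    case (elim n)
    have "norm (\<integral>x. f x * g n x \<partial>N) \<le> (\<delta> * A + (\<integral>x. (g n x)\<^sup>2 \<partial>N) / \<delta>) / 2"
      unfolding A_def using abs_integral_mult_le[OF f2 elim(1,2) \<delta>(1)] by simp
    also have "\<dots> < (e + e) / 2"
    proof -
      have "(\<integral>x. (g n x)\<^sup>2 \<partial>N) / \<delta> < e"
        using \<delta>(1) elim(3) by (simp add: divide_less_eq mult.commute)
      then show ?thesis using \<delta>(2) by (intro divide_strict_right_mono add_strict_mono) auto
    qed
    finally show ?case by simp
  qed
  then show "\<exists>n0. \<forall>n\<ge>n0. norm ((\<integral>x. f x * g n x \<partial>N) - 0) < e"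
    by (simp add: eventually_sequentially)
qed

lemma integral_empirical_distr:
  assumes "n \<ge> 1"
  shows "(\<integral>y. f y \<partial>empirical_distr n x) = (\<Sum>i<n. f (x i)) / real n"
proof -
  have "0 \<in> {..<n}" using assms by simp
  then have "{..<n} \<noteq> {}" by blast
  then show ?thesis
    unfolding empirical_distr_def by (simp add: integral_map_pmf integral_pmf_of_set)
qed

lemma integrable_mult_halfspace_ind:
  assumes "integrable proj_measure \<psi>"
  shows "integrable proj_measure (\<lambda>w. \<psi> w * halfspace_ind w x)"
proof (rule Bochner_Integration.integrable_bound[OF assms])
  have [measurable]: "\<psi> \<in> borel_measurable proj_measure" using assms by auto
  show "(\<lambda>w. \<psi> w * halfspace_ind w x) \<in> borel_measurable proj_measure" by measurable
qed (auto simp: halfspace_ind_def)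

lemma average_halfspace_transform:
  assumes \<psi>: "integrable proj_measure \<psi>"
  shows "(\<Sum>i<n. \<integral>w. \<psi> w * halfspace_ind w (x i) \<partial>proj_measure) / real n
     = (\<integral>w. \<psi> w * emp_proj_cdf n x w \<partial>proj_measure)"
proof -
  have "(\<Sum>i<n. \<integral>w. \<psi> w * halfspace_ind w (x i) \<partial>proj_measure)
      = (\<integral>w. (\<Sum>i<n. \<psi> w * halfspace_ind w (x i)) \<partial>proj_measure)"
    by (rule Bochner_Integration.integral_sum[symmetric]) (rule integrable_mult_halfspace_ind[OF \<psi>])
  then show ?thesis
    by (simp add: emp_proj_cdf_def sum_distrib_left[symmetric])
qed

context finite_mean_distribution
begin

lemma integrable_mult_halfspace_ind_pair:
  assumes \<psi>: "integrable proj_measure \<psi>"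
  shows "integrable (M \<Otimes>\<^sub>M proj_measure) (\<lambda>(y, w). \<psi> w * halfspace_ind w y)"
proof -
  interpret P: pair_sigma_finite M "proj_measure :: (('p \<Rightarrow> real) \<times> real) measure"
    by (rule pair_sigma_finite_M_proj_measure)
  have [measurable]: "\<psi> \<in> borel_measurable proj_measure" using \<psi> by auto
  have "(\<integral>\<^sup>+z. ennreal (norm ((\<lambda>(y, w). \<psi> w * halfspace_ind w y) z)) \<partial>(M \<Otimes>\<^sub>M proj_measure))
      \<le> (\<integral>\<^sup>+z. ennreal (norm (\<psi> (snd z))) \<partial>(M \<Otimes>\<^sub>M proj_measure))"
    by (intro nn_integral_mono) (auto simp: halfspace_ind_def)
  also have "\<dots> = (\<integral>\<^sup>+w. ennreal (norm (\<psi> w)) \<partial>proj_measure)"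
    by (subst P.M2.nn_integral_fst[symmetric]) (auto simp: emeasure_space_1)
  also have "\<dots> < \<infinity>" using \<psi> by (simp add: integrable_iff_bounded)
  finally show ?thesis by (simp add: integrable_iff_bounded)
qed

lemma integral_halfspace_transform:
  assumes \<psi>: "integrable proj_measure \<psi>"
  shows "integrable M (\<lambda>x. \<integral>w. \<psi> w * halfspace_ind w x \<partial>proj_measure)"
    and "(\<integral>x. (\<integral>w. \<psi> w * halfspace_ind w x \<partial>proj_measure) \<partial>M)
      = (\<integral>w. \<psi> w * proj_cdf w \<partial>proj_measure)"
proof -
  interpret P: pair_sigma_finite M "proj_measure :: (('p \<Rightarrow> real) \<times> real) measure"
    by (rule pair_sigma_finite_M_proj_measure)
  show "integrable M (\<lambda>x. \<integral>w. \<psi> w * halfspace_ind w x \<partial>proj_measure)"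
    using P.integrable_fst[OF integrable_mult_halfspace_ind_pair[OF \<psi>]] by simp
  show "(\<integral>x. (\<integral>w. \<psi> w * halfspace_ind w x \<partial>proj_measure) \<partial>M)
      = (\<integral>w. \<psi> w * proj_cdf w \<partial>proj_measure)"
    unfolding proj_cdf_def
    using P.Fubini_integral[of "\<lambda>y w. \<psi> w * halfspace_ind w y"] integrable_mult_halfspace_ind_pair[OF \<psi>]
    by simp
qed

end

locale vanishing_energy = finite_mean_distribution M for M :: "(real^'p::finite) measure" +
  fixes xs :: "nat \<Rightarrow> nat \<Rightarrow> real^'p"
  assumes energy_tendsto_0: "(\<lambda>n. energy_distance M n (xs n)) \<longlonglongrightarrow> 0"
begin

definition emp_converges :: "(real^'p \<Rightarrow> real) \<Rightarrow> bool" where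
  "emp_converges f \<longleftrightarrow>
     integrable M f \<and> (\<lambda>n. (\<Sum>i<n. f (xs n i)) / real n) \<longlonglongrightarrow> (\<integral>y. f y \<partial>M)"

lemma measurable_emp_proj_cdf [measurable]:
  "emp_proj_cdf n x \<in> borel_measurable (proj_measure :: (('p \<Rightarrow> real) \<times> real) measure)"
  unfolding emp_proj_cdf_def by measurable

lemma proj_cdf_dist_tendsto_0:
  "(\<lambda>n. \<integral>w. (emp_proj_cdf n (xs n) w - proj_cdf w)\<^sup>2 \<partial>proj_measure) \<longlonglongrightarrow> 0"
proof (rule Lim_transform_eventually)
  show "(\<lambda>n. sqrt (2/pi) / 2 * energy_distance M n (xs n)) \<longlonglongrightarrow> 0"
    using tendsto_mult_left[OF energy_tendsto_0, of "sqrt (2/pi) / 2"] by simp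
  show "\<forall>\<^sub>F n in sequentially. sqrt (2/pi) / 2 * energy_distance M n (xs n)
      = (\<integral>w. (emp_proj_cdf n (xs n) w - proj_cdf w)\<^sup>2 \<partial>proj_measure)"
    using eventually_ge_at_top[of 1]
    by eventually_elim (use energy_distance_eq_integral_proj_cdf(2) in simp)
qed

text \<open>The error of the empirical average is \<open>\<integral> \<psi> \<cdot> (emp_proj_cdf - proj_cdf)\<close>, and the second
  factor tends to \<open>0\<close> in \<open>L\<^sup>2\<close>.\<close>

lemma emp_converges_halfspace_transform:
  assumes \<psi>: "integrable proj_measure \<psi>" and \<psi>2: "integrable proj_measure (\<lambda>w. (\<psi> w)\<^sup>2)"
  shows "emp_converges (\<lambda>x. \<integral>w. \<psi> w * halfspace_ind w x \<partial>proj_measure)"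
proof -
  define H where "H x = (\<integral>w. \<psi> w * halfspace_ind w x \<partial>proj_measure)" for x
  define D where "D n w = emp_proj_cdf n (xs n) w - proj_cdf w" for n w
  have [measurable]: "\<psi> \<in> borel_measurable proj_measure" using \<psi> by auto
  have \<psi>_proj_cdf: "integrable proj_measure (\<lambda>w. \<psi> w * proj_cdf w)"
    by (rule Bochner_Integration.integrable_bound[OF \<psi>])
      (use proj_cdf_nonneg proj_cdf_le_1 in \<open>auto simp: abs_mult intro!: mult_left_le\<close>)
  have \<psi>_D: "integrable proj_measure (\<lambda>w. \<psi> w * D n w)" if "n \<ge> 1" for n
  proof (rule Bochner_Integration.integrable_bound[OF \<psi>])
    have "\<bar>D n w\<bar> \<le> 1" for w
      unfolding D_def
      using emp_proj_cdf_bounds[OF that, of "xs n" w] proj_cdf_nonneg[of w] proj_cdf_le_1[of w]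
      by (simp add: abs_le_iff)
    then show "AE w in proj_measure. norm (\<psi> w * D n w) \<le> norm (\<psi> w)"
      by (auto simp: abs_mult intro!: mult_left_le)
  qed (simp add: D_def)
  have "(\<lambda>n. \<integral>w. \<psi> w * D n w \<partial>proj_measure) \<longlonglongrightarrow> 0"
    unfolding D_def
  proof (rule tendsto_integral_mult_zero[OF \<psi>2 _ _ proj_cdf_dist_tendsto_0])
    show "\<forall>\<^sub>F n in sequentially. integrable proj_measure (\<lambda>w. (emp_proj_cdf n (xs n) w - proj_cdf w)\<^sup>2)"
      using eventually_ge_at_top[of 1] by eventually_elim (rule energy_distance_eq_integral_proj_cdf(1))
    show "\<forall>\<^sub>F n in sequentially. integrable proj_measure (\<lambda>w. \<psi> w * (emp_proj_cdf n (xs n) w - proj_cdf w))"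
      using eventually_ge_at_top[of 1] by eventually_elim (use \<psi>_D in \<open>simp add: D_def\<close>)
  qed
  moreover have "\<forall>\<^sub>F n in sequentially.
      (\<integral>w. \<psi> w * D n w \<partial>proj_measure) = (\<Sum>i<n. H (xs n i)) / real n - (\<integral>y. H y \<partial>M)"
    using eventually_ge_at_top[of 1]
  proof eventually_elim
    case (elim n)
    have "integrable proj_measure (\<lambda>w. \<psi> w * emp_proj_cdf n (xs n) w)"
      using Bochner_Integration.integrable_add[OF \<psi>_D[OF elim] \<psi>_proj_cdf]
      by (simp add: D_def algebra_simps)
    then show ?case
      unfolding H_def average_halfspace_transform[OF \<psi>] integral_halfspace_transform(2)[OF \<psi>] D_def
      using \<psi>_proj_cdf by (simp add: right_diff_distrib)
  qed
  ultimately have "(\<lambda>n. (\<Sum>i<n. H (xs n i)) / real n - (\<integral>y. H y \<partial>M)) \<longlonglongrightarrow> 0"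
    by (rule Lim_transform_eventually)
  then show ?thesis
    using integral_halfspace_transform(1)[OF \<psi>]
    unfolding emp_converges_def H_def[symmetric] by (simp add: LIM_zero_iff)
qed

end

lemma integral_antiderivative_halfline:
  fixes f F :: "real \<Rightarrow> real"
  assumes L: "0 \<le> L" and F: "\<And>r. (F has_real_derivative f r) (at r)" and f: "continuous_on UNIV f"
    and FL: "F (-L) = F L"
  shows "(\<integral>r. f r * indicator {-L..L} r * indicator {s..} r \<partial>lborel) = (F L - F s) * indicator {-L..L} s"
proof (cases "s \<le> L")
  case True
  have "(\<lambda>r. f r * indicator {-L..L} r * indicator {s..} r) = (\<lambda>r. indicator {max s (-L)..L} r *\<^sub>R f r)"
    by (auto simp: indicator_def fun_eq_iff)
  moreover have "(\<integral>r. indicator {max s (-L)..L} r *\<^sub>R f r \<partial>lborel) = F L - F (max s (-L))"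
  proof (rule integral_FTC_atLeastAtMost)
    show "(F has_vector_derivative f r) (at r within {max s (- L)..L})" for r
      using F[of r] by (simp add: has_real_derivative_iff_has_vector_derivative[symmetric]
          has_field_derivative_at_within)
  qed (use True L f in \<open>auto intro: continuous_on_subset\<close>)
  ultimately show ?thesis using True FL by (auto simp: max_def indicator_def)
next
  case False
  then have "(\<lambda>r. f r * indicator {-L..L} r * indicator {s..} r) = (\<lambda>r. 0)"
    by (auto simp: indicator_def fun_eq_iff)
  then show ?thesis using False by simp
qed

lemma integrable_proj_measure_prod:
  fixes \<phi> :: "('p::finite \<Rightarrow> real) \<Rightarrow> real" and k :: "real \<Rightarrow> real"
  assumes [measurable]: "\<phi> \<in> borel_measurable gauss" and \<phi>: "\<And>\<theta>. \<bar>\<phi> \<theta>\<bar> \<le> 1"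
    and k: "integrable lborel k"
  shows "integrable proj_measure (\<lambda>w. \<phi> (fst w) * k (snd w))"
proof -
  have [measurable]: "k \<in> borel_measurable borel" using k by auto
  have "(\<integral>\<^sup>+w. ennreal (norm (\<phi> (fst w) * k (snd w))) \<partial>proj_measure)
      \<le> (\<integral>\<^sup>+w. ennreal (norm (k (snd w))) \<partial>((gauss :: ('p \<Rightarrow> real) measure) \<Otimes>\<^sub>M lborel))"
    unfolding proj_measure_def
    by (intro nn_integral_mono ennreal_leI) (simp add: abs_mult mult_left_le_one_le \<phi>)
  also have "\<dots> = (\<integral>\<^sup>+r. ennreal (norm (k r)) \<partial>lborel)"
    by (subst lborel.nn_integral_fst[symmetric])
      (auto simp: prob_space.emeasure_space_1[OF prob_space_gauss, simplified])
  also have "\<dots> < \<infinity>" using k by (simp add: integrable_iff_bounded)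
  finally show ?thesis by (simp add: integrable_iff_bounded proj_measure_def)
qed

lemma integral_proj_measure_prod_halfspace:
  fixes \<phi> :: "('p::finite \<Rightarrow> real) \<Rightarrow> real" and k :: "real \<Rightarrow> real"
  assumes [measurable]: "\<phi> \<in> borel_measurable gauss" and \<phi>: "\<And>\<theta>. \<bar>\<phi> \<theta>\<bar> \<le> 1"
    and k: "integrable lborel k"
  shows "(\<integral>w. \<phi> (fst w) * k (snd w) * halfspace_ind w x \<partial>proj_measure)
     = (\<integral>\<theta>. \<phi> \<theta> * (\<integral>r. k r * indicator {proj \<theta> x..} r \<partial>lborel) \<partial>gauss)"
proof -
  interpret P: pair_sigma_finite "gauss :: ('p \<Rightarrow> real) measure" lborel
    by (rule pair_sigma_finite_gauss_lborel)
  have int: "integrable (gauss \<Otimes>\<^sub>M lborel) (\<lambda>w. \<phi> (fst w) * k (snd w) * halfspace_ind w x)"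
    using integrable_mult_halfspace_ind[OF integrable_proj_measure_prod[OF assms]]
    unfolding proj_measure_def by simp
  have "(\<integral>w. \<phi> (fst w) * k (snd w) * halfspace_ind w x \<partial>proj_measure)
      = (\<integral>\<theta>. (\<integral>r. \<phi> \<theta> * k r * halfspace_ind (\<theta>, r) x \<partial>lborel) \<partial>gauss)"
    unfolding proj_measure_def using P.integral_fst'[OF int] by simp
  also have "\<dots> = (\<integral>\<theta>. \<phi> \<theta> * (\<integral>r. k r * indicator {proj \<theta> x..} r \<partial>lborel) \<partial>gauss)"
  proof (intro Bochner_Integration.integral_cong refl)
    fix \<theta>
    have "(\<lambda>r. \<phi> \<theta> * k r * halfspace_ind (\<theta>, r) x) = (\<lambda>r. \<phi> \<theta> * (k r * indicator {proj \<theta> x..} r))"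
      by (auto simp: halfspace_ind_def indicator_def fun_eq_iff)
    then show "(\<integral>r. \<phi> \<theta> * k r * halfspace_ind (\<theta>, r) x \<partial>lborel)
        = \<phi> \<theta> * (\<integral>r. k r * indicator {proj \<theta> x..} r \<partial>lborel)"
      by simp
  qed
  finally show ?thesis .
qed

context vanishing_energy
begin

lemma emp_converges_const: "emp_converges (\<lambda>x. c)"
proof -
  have "\<forall>\<^sub>F n in sequentially. c = (\<Sum>i<n. c) / real n"
    using eventually_ge_at_top[of "1::nat"] by eventually_elim simp
  then have "(\<lambda>n. (\<Sum>i<n. c) / real n) \<longlonglongrightarrow> c"
    by (rule Lim_transform_eventually[OF tendsto_const])
  then show ?thesis unfolding emp_converges_def by (simp add: prob_space)
qed

lemma emp_converges_add: "emp_converges f \<Longrightarrow> emp_converges g \<Longrightarrow> emp_converges (\<lambda>x. f x + g x)"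
  unfolding emp_converges_def by (auto simp: sum.distrib add_divide_distrib intro: tendsto_add)

lemma emp_converges_cmult: "emp_converges f \<Longrightarrow> emp_converges (\<lambda>x. c * f x)"
  unfolding emp_converges_def
  by (auto simp: sum_distrib_left[symmetric] dest: tendsto_mult_left[where c=c])

text \<open>The half-space transform of \<open>\<psi> (\<theta>, r) = \<phi> \<theta> \<cdot> f r \<cdot> 1[-L, L](r)\<close> integrates \<open>f\<close> along
  the half-line above \<open>proj \<theta> x\<close>, producing the antiderivative of \<open>f\<close> composed with the
  projection.\<close>

lemma emp_converges_gauss_antiderivative:
  fixes \<phi> :: "('p \<Rightarrow> real) \<Rightarrow> real" and f F :: "real \<Rightarrow> real"
  assumes [measurable]: "\<phi> \<in> borel_measurable gauss" and \<phi>: "\<And>\<theta>. \<bar>\<phi> \<theta>\<bar> \<le> 1"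
    and L: "0 \<le> L" and F: "\<And>r. (F has_real_derivative f r) (at r)" and f: "continuous_on UNIV f"
    and FL: "F (-L) = F L"
  shows "emp_converges (\<lambda>x. \<integral>\<theta>. \<phi> \<theta> * ((F L - F (proj \<theta> x)) * indicator {-L..L} (proj \<theta> x)) \<partial>gauss)"
proof -
  define k where "k r = f r * indicator {-L..L} r" for r
  have k: "integrable lborel k" unfolding k_def
    using f by (intro borel_integrable_atLeastAtMost) (simp add: continuous_on_eq_continuous_at)
  have k2: "integrable lborel (\<lambda>r. (k r)\<^sup>2)"
  proof -
    have "(\<lambda>r. (k r)\<^sup>2) = (\<lambda>r. (f r)\<^sup>2 * indicator {-L..L} r)"
      by (auto simp: k_def indicator_def fun_eq_iff)
    moreover have "integrable lborel (\<lambda>r. (f r)\<^sup>2 * indicator {-L..L} r)"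
      using f by (intro borel_integrable_atLeastAtMost)
        (auto simp: continuous_on_eq_continuous_at intro!: continuous_intros)
    ultimately show ?thesis by simp
  qed
  have \<phi>2: "\<bar>(\<phi> \<theta>)\<^sup>2\<bar> \<le> 1" for \<theta> using \<phi>[of \<theta>] by (simp add: abs_square_le_1)
  have "integrable proj_measure (\<lambda>w. \<phi> (fst w) * k (snd w))"
    by (rule integrable_proj_measure_prod[OF _ \<phi> k]) measurable
  moreover have "integrable proj_measure (\<lambda>w. (\<phi> (fst w))\<^sup>2 * (k (snd w))\<^sup>2)"
    by (rule integrable_proj_measure_prod[OF _ \<phi>2 k2]) measurable
  ultimately have "emp_converges (\<lambda>x. \<integral>w. \<phi> (fst w) * k (snd w) * halfspace_ind w x \<partial>proj_measure)"
    using emp_converges_halfspace_transform by (simp add: power_mult_distrib)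
  moreover have "(\<integral>w. \<phi> (fst w) * k (snd w) * halfspace_ind w x \<partial>proj_measure)
      = (\<integral>\<theta>. \<phi> \<theta> * ((F L - F (proj \<theta> x)) * indicator {-L..L} (proj \<theta> x)) \<partial>gauss)" for x
  proof -
    have "(\<integral>w. \<phi> (fst w) * k (snd w) * halfspace_ind w x \<partial>proj_measure)
        = (\<integral>\<theta>. \<phi> \<theta> * (\<integral>r. k r * indicator {proj \<theta> x..} r \<partial>lborel) \<partial>gauss)"
      by (rule integral_proj_measure_prod_halfspace[OF _ \<phi> k]) measurable
    then show ?thesis
      by (simp add: k_def integral_antiderivative_halfline[OF L F f FL])
  qed
  ultimately show ?thesis by simp
qed

end

definition bump :: "real \<Rightarrow> real \<Rightarrow> real" where
  "bump R s = (1 - (s / R)\<^sup>2) * indicator {-R..R} s"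

definition gauss_bump :: "real \<Rightarrow> real^'p::finite \<Rightarrow> real" where
  "gauss_bump R x = (\<integral>\<theta>. bump R (proj \<theta> x) \<partial>(gauss :: ('p \<Rightarrow> real) measure))"

lemma measurable_bump [measurable]: "bump R \<in> borel_measurable borel"
  unfolding bump_def by measurable

lemma bump_nonneg:
  assumes "0 < R"
  shows "0 \<le> bump R s"
proof -
  have "(s / R)\<^sup>2 \<le> 1" if "\<bar>s\<bar> \<le> R"
    using that assms abs_le_square_iff[of s R] by (simp add: power_divide divide_le_eq_1)
  then show ?thesis by (auto simp: bump_def indicator_def abs_le_iff)
qed

lemma bump_le_indicator: "0 < R \<Longrightarrow> bump R s \<le> indicator {-R..R} s"
  by (auto simp: bump_def indicator_def)

lemma bump_ge:
  assumes "0 < R"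
  shows "1 - (s / R)\<^sup>2 \<le> bump R s"
proof -
  have "1 \<le> (s / R)\<^sup>2" if "R < \<bar>s\<bar>"
    using that assms abs_le_square_iff[of R s] by (simp add: power_divide le_divide_eq_1)
  then show ?thesis by (auto simp: bump_def indicator_def abs_le_iff)
qed

lemma std_normal_density_le_half: "std_normal_density u \<le> 1/2"
proof -
  have "exp (- u\<^sup>2 / 2) * 2 \<le> 1 * sqrt (2 * pi)"
    using pi_gt3 by (intro mult_mono) (auto simp: real_le_rsqrt)
  then show ?thesis unfolding std_normal_density_def by (simp add: divide_le_eq)
qed

lemma gauss_bump_nonneg: "0 < R \<Longrightarrow> 0 \<le> gauss_bump R x"
  unfolding gauss_bump_def by (simp add: integral_nonneg bump_nonneg)

lemma abs_bump_le_1: "0 < R \<Longrightarrow> \<bar>bump R s\<bar> \<le> 1"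
  using bump_nonneg[of R s] bump_le_indicator[of R s] by (cases "s \<in> {-R..R}") auto

lemma gauss_bump_le_1:
  assumes R: "0 < R"
  shows "gauss_bump R (x :: real^'p::finite) \<le> 1"
proof -
  interpret prob_space "gauss :: ('p \<Rightarrow> real) measure" by (rule prob_space_gauss)
  have "integrable gauss (\<lambda>\<theta>. bump R (proj \<theta> x))"
    by (rule integrable_const_bound[where B=1]) (simp_all add: abs_bump_le_1[OF R])
  then have "gauss_bump R x \<le> (\<integral>\<theta>. 1 \<partial>(gauss :: ('p \<Rightarrow> real) measure))"
    unfolding gauss_bump_def using abs_bump_le_1[OF R]
    by (intro integral_mono) (auto simp: abs_le_iff)
  then show ?thesis using prob_space[unfolded space_gauss] by simp
qed

lemma gauss_bump_eq:
  assumes "x \<noteq> 0"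
  shows "gauss_bump R x = (\<integral>u. std_normal_density u * bump R (norm x * u) \<partial>lborel)"
  unfolding gauss_bump_def by (rule integral_gauss_proj[OF assms]) simp

lemma integrable_std_normal_bump:
  assumes R: "0 < R"
  shows "integrable lborel (\<lambda>u. std_normal_density u * bump R (c * u))"
proof (rule Bochner_Integration.integrable_bound[of _ std_normal_density])
  show "AE u in lborel. norm (std_normal_density u * bump R (c * u)) \<le> norm (std_normal_density u)"
    using abs_bump_le_1[OF R] by (auto simp: abs_mult intro!: AE_I2 mult_left_le)
qed simp_all

lemma gauss_bump_ge:
  fixes x :: "real^'p::finite"
  assumes R: "0 < R"
  shows "1 - norm x / R \<le> gauss_bump R x"
proof (cases "x = 0")
  case True
  interpret prob_space "gauss :: ('p \<Rightarrow> real) measure" by (rule prob_space_gauss)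
  show ?thesis using True R prob_space[unfolded space_gauss] by (simp add: gauss_bump_def bump_def)
next
  case False
  have moment: "integrable lborel (\<lambda>u. std_normal_density u * u ^ (2 * 1))"
    using integrable_std_normal_moment[of 2] by simp
  have quadratic: "(\<lambda>u. std_normal_density u * (1 - (norm x * u / R)\<^sup>2))
      = (\<lambda>u. std_normal_density u - (norm x / R)\<^sup>2 * (std_normal_density u * u ^ (2 * 1)))"
    by (simp add: fun_eq_iff field_simps power2_eq_square)
  have "1 - (norm x / R)\<^sup>2 = (\<integral>u. std_normal_density u * (1 - (norm x * u / R)\<^sup>2) \<partial>lborel)"
    unfolding quadratic using moment integral_std_normal_moment_even[of 1] by simp
  also have "\<dots> \<le> gauss_bump R x"
    unfolding gauss_bump_eq[OF False]
  proof (rule integral_mono)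
    show "integrable lborel (\<lambda>u. std_normal_density u * (1 - (norm x * u / R)\<^sup>2))"
      unfolding quadratic using moment by simp
    show "std_normal_density u * (1 - (norm x * u / R)\<^sup>2) \<le> std_normal_density u * bump R (norm x * u)"
      for u by (intro mult_left_mono bump_ge R normal_density_nonneg)
  qed (rule integrable_std_normal_bump[OF R])
  finally have "1 - (norm x / R)\<^sup>2 \<le> gauss_bump R x" .
  moreover have "(norm x / R)\<^sup>2 \<le> norm x / R" if "norm x / R \<le> 1"
    unfolding power2_eq_square by (rule mult_right_le_one_le) (use that R in auto)
  ultimately show ?thesis
    using gauss_bump_nonneg[OF R, of x] by (cases "norm x / R \<le> 1") auto
qed

lemma gauss_bump_le:
  fixes x :: "real^'p::finite"
  assumes R: "0 < R" and x: "x \<noteq> 0"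
  shows "gauss_bump R x \<le> R / norm x"
proof -
  define t where "t = R / norm x"
  have t: "0 < t" using R x by (simp add: t_def)
  have "gauss_bump R x \<le> (\<integral>u. (1/2) * indicator {-t..t} u \<partial>lborel)"
    unfolding gauss_bump_eq[OF x]
  proof (intro integral_mono integrable_std_normal_bump R)
    show "integrable lborel (\<lambda>u. 1 / 2 * indicator {-t..t} u :: real)"
      by (intro integrable_mult_right) (simp add: integrable_indicator_iff emeasure_lborel_Icc_eq)
    fix u
    have "bump R (norm x * u) \<le> indicator {-t..t} u"
      using bump_le_indicator[OF R, of "norm x * u"] R x
      by (simp add: indicator_def t_def abs_le_iff field_simps mult.commute)
    then have "std_normal_density u * bump R (norm x * u) \<le> std_normal_density u * indicator {-t..t} u"
      by (intro mult_left_mono normal_density_nonneg)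
    also have "\<dots> \<le> (1/2) * indicator {-t..t} u"
      by (intro mult_right_mono std_normal_density_le_half) simp
    finally show "std_normal_density u * bump R (norm x * u) \<le> 1 / 2 * indicator {-t..t} u" .
  qed
  also have "\<dots> = t" using t by simp
  finally show ?thesis by (simp add: t_def)
qed

lemma tail_indicator_le_gauss_bump:
  fixes x :: "real^'p::finite"
  assumes R: "0 < R" and \<epsilon>: "0 < \<epsilon>"
  shows "indicator {x. R / \<epsilon> < norm x} x \<le> 1 - gauss_bump R x + \<epsilon>"
proof (cases "R / \<epsilon> < norm x")
  case True
  have "0 < R / \<epsilon>" using R \<epsilon> by simp
  with True have "gauss_bump R x \<le> R / norm x"
    by (intro gauss_bump_le R) auto
  also have "\<dots> \<le> R / (R / \<epsilon>)"
    using True R \<open>0 < R / \<epsilon>\<close> by (intro divide_left_mono mult_pos_pos) auto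
  finally show ?thesis using True R \<epsilon> by simp
next
  case False
  then show ?thesis using gauss_bump_le_1[OF R, of x] \<epsilon> by simp
qed

context finite_mean_distribution
begin

lemma integral_gauss_bump_ge:
  assumes R: "0 < R" and int: "integrable M (gauss_bump R)"
  shows "1 - (\<integral>x. norm x \<partial>M) / R \<le> (\<integral>x. gauss_bump R x \<partial>M)"
proof -
  have "(\<integral>x. 1 - norm x / R \<partial>M) \<le> (\<integral>x. gauss_bump R x \<partial>M)"
    using integrable_norm int by (intro integral_mono gauss_bump_ge[OF R]) auto
  then show ?thesis
    using integrable_norm by (simp add: prob_space)
qed

end

context vanishing_energy
begin

lemma emp_converges_gauss_bump:
  assumes R: "0 < R"
  shows "emp_converges (gauss_bump R)"
proof -
  have antiderivative: "(- R\<^sup>2 / 2 - - s\<^sup>2 / 2) * indicator {-R..R} s = - R\<^sup>2 / 2 * bump R s" for s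
    using R by (simp add: bump_def power_divide field_simps)
  have "emp_converges (\<lambda>x. \<integral>\<theta>. 1 * ((- R\<^sup>2 / 2 - - (proj \<theta> x)\<^sup>2 / 2) * indicator {-R..R} (proj \<theta> x)) \<partial>gauss)"
    using R by (intro emp_converges_gauss_antiderivative) (auto intro!: derivative_eq_intros continuous_intros)
  then have "emp_converges (\<lambda>x. (- 2 / R\<^sup>2) * (\<integral>\<theta>. - R\<^sup>2 / 2 * bump R (proj \<theta> x) \<partial>gauss))"
    unfolding antiderivative mult_1 by (rule emp_converges_cmult)
  moreover have "(\<lambda>x. (- 2 / R\<^sup>2) * (\<integral>\<theta>. - R\<^sup>2 / 2 * bump R (proj \<theta> x) \<partial>gauss)) = gauss_bump R"
    using R by (simp add: gauss_bump_def fun_eq_iff)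
  ultimately show ?thesis by metis
qed

text \<open>\<open>1 - gauss_bump R\<close> dominates the tail beyond \<open>R / \<epsilon>\<close> up to \<open>\<epsilon>\<close>, and its \<open>M\<close>-mean is small
  once \<open>R\<close> is large compared with the mean of \<open>norm\<close>.\<close>

lemma emp_tight:
  assumes e: "0 < \<epsilon>"
  shows "\<exists>\<rho>>0. (\<integral>x. indicator {x. \<rho> < norm x} x \<partial>M) \<le> 3 * \<epsilon> \<and>
     (\<forall>\<^sub>F n in sequentially. (\<Sum>i<n. indicator {x. \<rho> < norm x} (xs n i)) / real n \<le> 3 * \<epsilon>)"
proof -
  define R where "R = (\<integral>x. norm x \<partial>M) / \<epsilon> + 1"
  have R: "0 < R" "(\<integral>x. norm x \<partial>M) / R \<le> \<epsilon>"
    unfolding R_def using e Bochner_Integration.integral_nonneg[of M norm]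
    by (auto simp: field_simps add_pos_nonneg)
  note tail = tail_indicator_le_gauss_bump[OF R(1) e]
  have conv: "emp_converges (gauss_bump R)" by (rule emp_converges_gauss_bump[OF R(1)])
  then have int: "integrable M (gauss_bump R)" unfolding emp_converges_def by simp
  have mean: "1 - \<epsilon> \<le> (\<integral>x. gauss_bump R x \<partial>M)"
    using integral_gauss_bump_ge[OF R(1) int] R(2) by simp
  have "(\<integral>x. indicator {x. R / \<epsilon> < norm x} x \<partial>M) \<le> (\<integral>x. 1 - gauss_bump R x + \<epsilon> \<partial>M)"
    using int by (intro integral_mono tail) (auto intro: integrable_const_bound[where B=1])
  also have "\<dots> \<le> 3 * \<epsilon>" using int mean e by (simp add: prob_space)
  finally have "(\<integral>x. indicator {x. R / \<epsilon> < norm x} x \<partial>M) \<le> 3 * \<epsilon>" .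
  moreover have "\<forall>\<^sub>F n in sequentially. (\<Sum>i<n. indicator {x. R / \<epsilon> < norm x} (xs n i)) / real n \<le> 3 * \<epsilon>"
  proof -
    have "\<forall>\<^sub>F n in sequentially. dist ((\<Sum>i<n. gauss_bump R (xs n i)) / real n) (\<integral>x. gauss_bump R x \<partial>M) < \<epsilon>"
      using conv e unfolding emp_converges_def by (auto simp: tendsto_iff)
    with eventually_ge_at_top[of 1] show ?thesis
    proof eventually_elim
      case (elim n)
      have "(\<Sum>i<n. indicator {x. R / \<epsilon> < norm x} (xs n i)) / real n
          \<le> (\<Sum>i<n. 1 - gauss_bump R (xs n i) + \<epsilon>) / real n"
        by (intro divide_right_mono sum_mono tail) auto
      also have "\<dots> = 1 + \<epsilon> - (\<Sum>i<n. gauss_bump R (xs n i)) / real n"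
        using elim(1) by (simp add: sum.distrib sum_subtractf field_simps)
      also have "\<dots> \<le> 3 * \<epsilon>" using elim(2) mean by (simp add: dist_real_def abs_less_iff)
      finally show ?case .
    qed
  qed
  ultimately show ?thesis using R e by (intro exI[of _ "R / \<epsilon>"]) auto
qed

end

lemma abs_average_diff_le:
  fixes f g h :: "'a \<Rightarrow> real"
  assumes "\<And>x. \<bar>f x - g x\<bar> \<le> h x"
  shows "\<bar>(\<Sum>i<n. f (y i)) / real n - (\<Sum>i<n. g (y i)) / real n\<bar> \<le> (\<Sum>i<n. h (y i)) / real n"
proof -
  have "\<bar>\<Sum>i<n. f (y i) - g (y i)\<bar> \<le> (\<Sum>i<n. h (y i))"
    using assms by (intro order_trans[OF sum_abs sum_mono])
  then show ?thesis
    by (simp add: sum_subtractf diff_divide_distrib[symmetric] divide_right_mono)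
qed

lemma abs_integral_diff_le:
  fixes f g h :: "'a \<Rightarrow> real"
  assumes "integrable N f" "integrable N g" "integrable N h" "\<And>x. \<bar>f x - g x\<bar> \<le> h x"
  shows "\<bar>(\<integral>x. f x \<partial>N) - (\<integral>x. g x \<partial>N)\<bar> \<le> (\<integral>x. h x \<partial>N)"
proof -
  have "\<bar>(\<integral>x. f x \<partial>N) - (\<integral>x. g x \<partial>N)\<bar> \<le> (\<integral>x. \<bar>f x - g x\<bar> \<partial>N)"
    using assms integral_abs_bound[of N "\<lambda>x. f x - g x"] by simp
  also have "\<dots> \<le> (\<integral>x. h x \<partial>N)"
    using assms by (intro integral_mono) auto
  finally show ?thesis .
qed

context vanishing_energy
begin

lemma emp_converges_of_approx:
  fixes f :: "real^'p \<Rightarrow> real"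
  assumes f: "integrable M f" and f_bound: "\<And>x. \<bar>f x\<bar> \<le> B"
    and approx: "\<And>\<epsilon> \<rho>. 0 < \<epsilon> \<Longrightarrow>
      \<exists>g. emp_converges g \<and> (\<forall>x. \<bar>g x\<bar> \<le> B) \<and> (\<forall>x. norm x \<le> \<rho> \<longrightarrow> \<bar>g x - f x\<bar> \<le> \<epsilon>)"
  shows "emp_converges f"
proof -
  have B: "0 \<le> B" using f_bound[of 0] by simp
  have "(\<lambda>n. (\<Sum>i<n. f (xs n i)) / real n) \<longlonglongrightarrow> (\<integral>y. f y \<partial>M)"
  proof (rule LIMSEQ_I)
    fix e :: real
    assume e: "0 < e"
    define \<epsilon> where "\<epsilon> = e / (4 + 12 * B)"
    have \<epsilon>: "0 < \<epsilon>" "\<epsilon> * (3 + 12 * B) < e"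
      unfolding \<epsilon>_def using e B by (auto simp: field_simps)
    define tail where "tail \<rho> = (indicator {x. \<rho> < norm x} :: real^'p \<Rightarrow> real)" for \<rho>
    obtain \<rho> where \<rho>: "(\<integral>x. tail \<rho> x \<partial>M) \<le> 3 * \<epsilon>"
      "\<forall>\<^sub>F n in sequentially. (\<Sum>i<n. tail \<rho> (xs n i)) / real n \<le> 3 * \<epsilon>"
      using emp_tight[OF \<epsilon>(1)] unfolding tail_def by blast
    obtain g where g: "emp_converges g" "\<And>x. \<bar>g x\<bar> \<le> B" "\<And>x. norm x \<le> \<rho> \<Longrightarrow> \<bar>g x - f x\<bar> \<le> \<epsilon>"
      using approx[OF \<epsilon>(1), of \<rho>] by blast
    have diff: "\<bar>f x - g x\<bar> \<le> \<epsilon> + 2 * B * tail \<rho> x" for x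
      using f_bound[of x] g(2)[of x] g(3)[of x] \<epsilon>
      by (cases "\<rho> < norm x") (auto simp: tail_def abs_le_iff)
    have tail_int: "integrable M (tail \<rho>)"
      unfolding tail_def by (rule integrable_const_bound[where B=1]) auto
    have "\<bar>(\<integral>y. f y \<partial>M) - (\<integral>y. g y \<partial>M)\<bar> \<le> (\<integral>y. \<epsilon> + 2 * B * tail \<rho> y \<partial>M)"
      using f g(1) tail_int diff unfolding emp_converges_def by (intro abs_integral_diff_le) auto
    also have "\<dots> = \<epsilon> + 2 * B * (\<integral>y. tail \<rho> y \<partial>M)"
      using tail_int by (simp add: prob_space)
    also have "\<dots> \<le> \<epsilon> + 2 * B * (3 * \<epsilon>)"
      using \<rho>(1) B by (intro add_left_mono mult_left_mono) auto
    finally have integral_close: "\<bar>(\<integral>y. f y \<partial>M) - (\<integral>y. g y \<partial>M)\<bar> \<le> \<epsilon> + 2 * B * (3 * \<epsilon>)" .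
    have "\<forall>\<^sub>F n in sequentially. dist ((\<Sum>i<n. g (xs n i)) / real n) (\<integral>x. g x \<partial>M) < \<epsilon>"
      using g(1) \<epsilon> unfolding emp_converges_def by (auto simp: tendsto_iff)
    with \<rho>(2) eventually_ge_at_top[of 1]
    have "\<forall>\<^sub>F n in sequentially. norm ((\<Sum>i<n. f (xs n i)) / real n - (\<integral>y. f y \<partial>M)) < e"
    proof eventually_elim
      case (elim n)
      have "\<bar>(\<Sum>i<n. f (xs n i)) / real n - (\<Sum>i<n. g (xs n i)) / real n\<bar>
          \<le> (\<Sum>i<n. \<epsilon> + 2 * B * tail \<rho> (xs n i)) / real n"
        by (rule abs_average_diff_le[OF diff])
      also have "\<dots> = \<epsilon> + 2 * B * ((\<Sum>i<n. tail \<rho> (xs n i)) / real n)"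
        using elim(2) by (simp add: sum.distrib sum_distrib_left[symmetric] field_simps)
      also have "\<dots> \<le> \<epsilon> + 2 * B * (3 * \<epsilon>)"
        using elim(1) B by (intro add_left_mono mult_left_mono) auto
      finally have "norm ((\<Sum>i<n. f (xs n i)) / real n - (\<integral>y. f y \<partial>M)) < \<epsilon> * (3 + 12 * B)"
        using integral_close elim(3) by (simp add: dist_real_def algebra_simps abs_diff_less_iff abs_le_iff)
      then show ?case using \<epsilon>(2) by simp
    qed
    then show "\<exists>n0. \<forall>n\<ge>n0. norm ((\<Sum>i<n. f (xs n i)) / real n - (\<integral>y. f y \<partial>M)) < e"
      by (simp add: eventually_sequentially)
  qed
  then show ?thesis using f unfolding emp_converges_def by simp
qed

end

lemma abs_set_average_diff_le:
  fixes h :: "'a \<Rightarrow> real"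
  assumes "prob_space N" and [measurable]: "B \<in> sets N" "h \<in> borel_measurable N"
    and B: "0 < measure N B" and close: "\<And>\<theta>. \<theta> \<in> B \<Longrightarrow> \<bar>h \<theta> - c\<bar> \<le> \<eta>"
  shows "\<bar>(1 / measure N B) * (\<integral>\<theta>. indicator B \<theta> * h \<theta> \<partial>N) - c\<bar> \<le> \<eta>"
proof -
  interpret prob_space N by fact
  have "B \<noteq> {}" using B by auto
  then have \<eta>: "0 \<le> \<eta>" using close by force
  have bound: "\<bar>indicator B \<theta> * (h \<theta> - c)\<bar> \<le> indicator B \<theta> * \<eta>" for \<theta>
    using close[of \<theta>] \<eta> by (simp add: indicator_def)
  have int_B: "integrable N (\<lambda>\<theta>. indicator B \<theta> * a)" for a :: real
    by (rule integrable_const_bound[where B="\<bar>a\<bar>"]) (auto simp: indicator_def)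
  have int_diff: "integrable N (\<lambda>\<theta>. indicator B \<theta> * (h \<theta> - c))"
    by (rule Bochner_Integration.integrable_bound[OF int_B[of \<eta>]]) (use bound \<eta> in \<open>auto simp: indicator_def\<close>)
  then have int_h: "integrable N (\<lambda>\<theta>. indicator B \<theta> * h \<theta>)"
    using Bochner_Integration.integrable_add[OF int_diff int_B[of c]] by (simp add: algebra_simps)
  have "\<bar>(\<integral>\<theta>. indicator B \<theta> * h \<theta> \<partial>N) - measure N B * c\<bar> = \<bar>\<integral>\<theta>. indicator B \<theta> * (h \<theta> - c) \<partial>N\<bar>"
    using int_h int_B[of c] by (simp add: right_diff_distrib)
  also have "\<dots> \<le> (\<integral>\<theta>. \<bar>indicator B \<theta> * (h \<theta> - c)\<bar> \<partial>N)"
    by (rule integral_abs_bound)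
  also have "\<dots> \<le> (\<integral>\<theta>. indicator B \<theta> * \<eta> \<partial>N)"
    using int_diff int_B[of \<eta>] by (intro integral_mono bound) auto
  also have "\<dots> = measure N B * \<eta>" by simp
  finally show ?thesis
    using B by (simp add: abs_mult divide_le_eq field_simps)
qed

definition dir_box :: "('p::finite \<Rightarrow> real) \<Rightarrow> real \<Rightarrow> ('p \<Rightarrow> real) set" where
  "dir_box t \<delta> = Pi\<^sub>E UNIV (\<lambda>k. {t k - \<delta> <..< t k + \<delta>})"

lemma dir_box_sets [measurable]: "dir_box t \<delta> \<in> sets (gauss :: ('p::finite \<Rightarrow> real) measure)"
  unfolding dir_box_def gauss_def by (intro sets_PiM_I_finite) auto

lemma abs_proj_diff_le_of_dir_box:
  fixes x :: "real^'p::finite"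
  assumes "\<theta> \<in> dir_box t \<delta>"
  shows "\<bar>proj \<theta> x - proj t x\<bar> \<le> \<delta> * CARD('p) * norm x"
proof -
  have "\<bar>\<theta> k - t k\<bar> \<le> \<delta>" for k
    using assms by (auto simp: dir_box_def PiE_iff abs_le_iff dest!: spec[of _ k])
  then have "(\<Sum>k\<in>UNIV. \<bar>\<theta> k - t k\<bar>) * norm x \<le> (\<Sum>k\<in>(UNIV::'p set). \<delta>) * norm x"
    by (intro mult_right_mono sum_mono) auto
  moreover have "proj \<theta> x - proj t x = proj (\<lambda>k. \<theta> k - t k) x"
    unfolding proj_def by (simp add: sum_subtractf algebra_simps)
  ultimately show ?thesis
    using abs_proj_le[of "\<lambda>k. \<theta> k - t k" x] by (simp add: mult.commute)
qed

lemma emeasure_std_normal_interval_pos: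
  assumes "a < b"
  shows "emeasure (density lborel std_normal_density) {a<..<b} \<noteq> 0"
proof
  assume "emeasure (density lborel std_normal_density) {a<..<b} = 0"
  then have "AE x in lborel. ennreal (std_normal_density x) * indicator {a<..<b} x = 0"
    by (subst (asm) emeasure_density) (auto simp: nn_integral_0_iff_AE)
  then have "AE x in lborel. x \<notin> {a<..<b}"
  proof eventually_elim
    case (elim x)
    show ?case
      using elim normal_density_pos[of 1 0 x] by (auto simp: indicator_def split: if_splits)
  qed
  then have "{a<..<b} \<in> null_sets lborel" by (subst AE_iff_null_sets) auto
  then show False using assms by (simp add: null_sets_def emeasure_lborel_Ioo)
qed

lemma measure_gauss_dir_box_pos:
  assumes "0 < \<delta>"
  shows "0 < measure (gauss :: ('p::finite \<Rightarrow> real) measure) (dir_box t \<delta>)"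
proof -
  interpret prob_space "gauss :: ('p \<Rightarrow> real) measure" by (rule prob_space_gauss)
  interpret product_sigma_finite "\<lambda>_::'p. density lborel std_normal_density"
    unfolding product_sigma_finite_def using prob_space_std_normal prob_space_imp_sigma_finite by blast
  have "emeasure (gauss :: ('p \<Rightarrow> real) measure) (dir_box t \<delta>)
      = (\<Prod>k\<in>UNIV. emeasure (density lborel std_normal_density) {t k - \<delta> <..< t k + \<delta>})"
    unfolding dir_box_def gauss_def by (subst emeasure_PiM) auto
  also have "\<dots> \<noteq> 0"
    using emeasure_std_normal_interval_pos assms by (subst ennreal_prod_eq_0) auto
  finally show ?thesis by (simp add: emeasure_eq_measure zero_less_measure_iff)
qed

context vanishing_energy
begin

text \<open>A Lipschitz profile \<open>K\<close> along a fixed direction \<open>t\<close> is approximated on balls by its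
  average over directions in a small box around \<open>t\<close>; such averages are \<open>gauss\<close>-weighted
  integrals with weight \<open>indicator (dir_box t \<delta>) / measure gauss (dir_box t \<delta>)\<close>.\<close>

lemma emp_converges_of_gauss_weighted:
  fixes K :: "real \<Rightarrow> real"
  assumes [measurable]: "K \<in> borel_measurable borel" and K_bound: "\<And>s. \<bar>K s\<bar> \<le> B"
    and K_lipschitz: "\<And>a b. \<bar>K a - K b\<bar> \<le> \<bar>a - b\<bar>"
    and weighted: "\<And>\<phi>. \<phi> \<in> borel_measurable gauss \<Longrightarrow> (\<And>\<theta>. \<bar>\<phi> \<theta>\<bar> \<le> 1) \<Longrightarrow>
      emp_converges (\<lambda>x. \<integral>\<theta>. \<phi> \<theta> * K (proj \<theta> x) \<partial>gauss)"
  shows "emp_converges (\<lambda>x. K (proj t x))"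
proof (rule emp_converges_of_approx[where B=B])
  show "integrable M (\<lambda>x. K (proj t x))"
    by (rule integrable_const_bound[where B=B]) (auto simp: K_bound)
  show "\<bar>K (proj t x)\<bar> \<le> B" for x by (rule K_bound)
  fix \<epsilon> \<rho> :: real
  assume \<epsilon>: "0 < \<epsilon>"
  define \<delta> where "\<delta> = \<epsilon> / (CARD('p) * (\<bar>\<rho>\<bar> + 1))"
  have \<delta>: "0 < \<delta>" unfolding \<delta>_def using \<epsilon> by (simp add: add_pos_nonneg)
  define D where "D = dir_box t \<delta>"
  define m where "m = measure (gauss :: ('p \<Rightarrow> real) measure) D"
  have m: "0 < m" unfolding m_def D_def by (rule measure_gauss_dir_box_pos[OF \<delta>])
  define g where "g x = (1 / m) * (\<integral>\<theta>. indicator D \<theta> * K (proj \<theta> x) \<partial>gauss)" for x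
  have "emp_converges g"
    unfolding g_def by (intro emp_converges_cmult weighted) (auto simp: D_def)
  moreover have "\<bar>g x\<bar> \<le> B" for x
    using abs_set_average_diff_le[OF prob_space_gauss _ _ m[unfolded m_def], of "\<lambda>\<theta>. K (proj \<theta> x)" 0 B]
      K_bound by (simp add: g_def m_def D_def)
  moreover have "\<bar>g x - K (proj t x)\<bar> \<le> \<epsilon>" if x: "norm x \<le> \<rho>" for x
  proof -
    have "\<delta> * CARD('p) * norm x \<le> \<delta> * CARD('p) * (\<bar>\<rho>\<bar> + 1)"
      using x \<delta> by (intro mult_left_mono) auto
    also have "\<dots> = \<epsilon>" unfolding \<delta>_def by (simp add: add_pos_nonneg)
    finally have "\<bar>K (proj \<theta> x) - K (proj t x)\<bar> \<le> \<epsilon>" if "\<theta> \<in> D" for \<theta>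
      using K_lipschitz[of "proj \<theta> x" "proj t x"] abs_proj_diff_le_of_dir_box[of \<theta> t \<delta> x] that
      unfolding D_def by linarith
    then show ?thesis
      using abs_set_average_diff_le[OF prob_space_gauss _ _ m[unfolded m_def],
          of "\<lambda>\<theta>. K (proj \<theta> x)" "K (proj t x)" \<epsilon>]
      by (simp add: g_def m_def D_def)
  qed
  ultimately show "\<exists>g. emp_converges g \<and> (\<forall>x. \<bar>g x\<bar> \<le> B) \<and> (\<forall>x. norm x \<le> \<rho> \<longrightarrow> \<bar>g x - K (proj t x)\<bar> \<le> \<epsilon>)"
    by blast
qed

end

lemma abs_diff_le_of_deriv_bound:
  fixes F f :: "real \<Rightarrow> real"
  assumes F: "\<And>r. (F has_real_derivative f r) (at r)" and f: "\<And>r. \<bar>f r\<bar> \<le> 1"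
  shows "\<bar>F a - F b\<bar> \<le> \<bar>a - b\<bar>"
proof -
  have le: "\<bar>F v - F u\<bar> \<le> v - u" if "u < v" for u v
  proof -
    have "\<exists>z>u. z < v \<and> F v - F u = (v - u) * f z"
      by (rule MVT2[OF that]) (use F in auto)
    then obtain z where "F v - F u = (v - u) * f z" by blast
    then show ?thesis
      using f[of z] that by (simp add: abs_mult mult_left_le)
  qed
  show ?thesis
    using le[of a b] le[of b a] by (cases a b rule: linorder_cases) (auto simp: abs_minus_commute)
qed

lemma abs_diff_cut_le:
  fixes h :: "real \<Rightarrow> real"
  assumes lipschitz: "\<And>a b. \<bar>h a - h b\<bar> \<le> \<bar>a - b\<bar>" and h: "h L = 0" "h (-L) = 0"
  shows "\<bar>h a * indicator {-L..L} a - h b * indicator {-L..L} b\<bar> \<le> \<bar>a - b\<bar>"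
proof -
  have one_inside: "\<bar>h a\<bar> \<le> \<bar>a - b\<bar>" if "a \<in> {-L..L}" "b \<notin> {-L..L}" for a b
  proof (cases "b > L")
    case True
    then show ?thesis using lipschitz[of a L] that h by auto
  next
    case False
    then show ?thesis using lipschitz[of a "-L"] that h by auto
  qed
  show ?thesis
    using lipschitz[of a b] one_inside[of a b] one_inside[of b a]
    by (auto simp: indicator_def abs_minus_commute)
qed

context vanishing_energy
begin

lemma emp_converges_truncated_antiderivative_proj:
  fixes F f :: "real \<Rightarrow> real"
  assumes F: "\<And>r. (F has_real_derivative f r) (at r)" and f: "continuous_on UNIV f" "\<And>r. \<bar>f r\<bar> \<le> 1"
    and F_bound: "\<And>r. \<bar>F r\<bar> \<le> 1" and L: "0 \<le> L" and FL: "F (-L) = F L"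
  shows "emp_converges (\<lambda>x. (F L - F (proj t x)) * indicator {-L..L} (proj t x))"
proof (rule emp_converges_of_gauss_weighted[where B=2 and K="\<lambda>s. (F L - F s) * indicator {-L..L} s"])
  have [measurable]: "F \<in> borel_measurable borel"
    using F by (intro borel_measurable_continuous_onI DERIV_continuous_on) auto
  show "(\<lambda>s. (F L - F s) * indicator {-L..L} s) \<in> borel_measurable borel" by measurable
  show "\<bar>(F L - F s) * indicator {-L..L} s\<bar> \<le> 2" for s
    using F_bound[of L] F_bound[of s] by (auto simp: indicator_def)
  show "\<bar>(F L - F a) * indicator {-L..L} a - (F L - F b) * indicator {-L..L} b\<bar> \<le> \<bar>a - b\<bar>" for a b
    using abs_diff_le_of_deriv_bound[OF F f(2)] FL
    by (intro abs_diff_cut_le) (auto simp: abs_minus_commute)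
  show "emp_converges (\<lambda>x. \<integral>\<theta>. \<phi> \<theta> * ((F L - F (proj \<theta> x)) * indicator {-L..L} (proj \<theta> x)) \<partial>gauss)"
    if "\<phi> \<in> borel_measurable gauss" "\<And>\<theta>. \<bar>\<phi> \<theta>\<bar> \<le> 1" for \<phi>
    using that by (intro emp_converges_gauss_antiderivative[OF _ _ L F f(1) FL])
qed

lemma emp_converges_periodic_proj:
  fixes F f :: "real \<Rightarrow> real"
  assumes F: "\<And>r. (F has_real_derivative f r) (at r)" and f: "continuous_on UNIV f" "\<And>r. \<bar>f r\<bar> \<le> 1"
    and F_bound: "\<And>r. \<bar>F r\<bar> \<le> 1" and periodic: "\<And>n::int. F (2 * pi * n) = F 0"
  shows "emp_converges (\<lambda>x. F (proj t x))"
proof (rule emp_converges_of_approx[where B=1])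
  have [measurable]: "F \<in> borel_measurable borel"
    using F by (intro borel_measurable_continuous_onI DERIV_continuous_on) auto
  show "integrable M (\<lambda>x. F (proj t x))"
    by (rule integrable_const_bound[where B=1]) (auto simp: F_bound)
  show "\<bar>F (proj t x)\<bar> \<le> 1" for x by (rule F_bound)
  fix \<epsilon> \<rho> :: real
  assume \<epsilon>: "0 < \<epsilon>"
  define S where "S = (\<Sum>k\<in>UNIV. \<bar>t k\<bar>)"
  define m where "m = nat \<lceil>S * \<bar>\<rho>\<bar> / (2 * pi)\<rceil>"
  define L where "L = 2 * pi * real m"
  have L: "0 \<le> L" "S * \<bar>\<rho>\<bar> \<le> L"
  proof -
    have "S * \<bar>\<rho>\<bar> / (2 * pi) \<le> real m"
      unfolding m_def by (rule real_nat_ceiling_ge)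
    then show "0 \<le> L" "S * \<bar>\<rho>\<bar> \<le> L"
      unfolding L_def by (auto simp: divide_le_eq mult.commute)
  qed
  have FL: "F L = F 0" "F (-L) = F 0"
    using periodic[of "int m"] periodic[of "- int m"] by (simp_all add: L_def)
  define g where "g = (\<lambda>x. F 0 - (F L - F (proj t x)) * indicator {-L..L} (proj t x))"
  have "emp_converges (\<lambda>x. F 0 + (- 1) * ((F L - F (proj t x)) * indicator {-L..L} (proj t x)))"
    using FL by (intro emp_converges_add emp_converges_const emp_converges_cmult
        emp_converges_truncated_antiderivative_proj[OF F f F_bound L(1)]) simp
  then have "emp_converges g" unfolding g_def by simp
  moreover have "\<bar>g x\<bar> \<le> 1" for x
    using F_bound[of 0] F_bound[of "proj t x"] FL by (simp add: g_def indicator_def)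
  moreover have "\<bar>g x - F (proj t x)\<bar> \<le> \<epsilon>" if "norm x \<le> \<rho>" for x
  proof -
    have "\<bar>proj t x\<bar> \<le> S * norm x"
      unfolding S_def by (rule abs_proj_le)
    also have "\<dots> \<le> S * \<bar>\<rho>\<bar>"
      using that by (intro mult_left_mono) (auto simp: S_def sum_nonneg)
    finally have "\<bar>proj t x\<bar> \<le> S * \<bar>\<rho>\<bar>" .
    then show ?thesis
      using L FL \<epsilon> by (simp add: g_def indicator_def abs_le_iff)
  qed
  ultimately show "\<exists>g. emp_converges g \<and> (\<forall>x. \<bar>g x\<bar> \<le> 1) \<and> (\<forall>x. norm x \<le> \<rho> \<longrightarrow> \<bar>g x - F (proj t x)\<bar> \<le> \<epsilon>)"
    by blast
qed

lemma emp_converges_cos_proj: "emp_converges (\<lambda>x. cos (proj t x))"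
  by (rule emp_converges_periodic_proj[where f="\<lambda>r. - sin r"])
    (auto intro!: derivative_eq_intros continuous_intros simp: cos_int_2pin)

lemma emp_converges_sin_proj: "emp_converges (\<lambda>x. sin (proj t x))"
  by (rule emp_converges_periodic_proj[where f=cos])
    (auto intro!: derivative_eq_intros continuous_intros simp: sin_int_2pin)

end

section \<open>Trigonometric polynomials and bounded continuous test functions\<close>

definition trig_sum :: "(complex \<times> ('p::finite \<Rightarrow> real)) list \<Rightarrow> real^'p \<Rightarrow> complex" where
  "trig_sum cs x = (\<Sum>(c, t)\<leftarrow>cs. c * cis (proj t x))"

definition trig_polys :: "(real^'p::finite \<Rightarrow> real) set" where
  "trig_polys = {f. \<exists>cs. f = (\<lambda>x. Re (trig_sum cs x))}"

lemma trig_sum_Nil [simp]: "trig_sum [] x = 0"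
  by (simp add: trig_sum_def)

lemma trig_sum_Cons: "trig_sum ((c, t) # cs) x = c * cis (proj t x) + trig_sum cs x"
  by (simp add: trig_sum_def)

lemma trig_sum_append: "trig_sum (cs @ ds) x = trig_sum cs x + trig_sum ds x"
  by (simp add: trig_sum_def)

lemma trig_sum_cnj: "trig_sum (map (\<lambda>(c, t). (cnj c, \<lambda>k. - t k)) cs) x = cnj (trig_sum cs x)"
  by (induction cs) (auto simp: trig_sum_Cons proj_uminus_dir cis_cnj)

lemma trig_sum_scale: "trig_sum (map (\<lambda>(c, t). (a * c, t)) cs) x = a * trig_sum cs x"
  by (induction cs) (auto simp: trig_sum_Cons algebra_simps)

lemma trig_sum_mult:
  "trig_sum (concat (map (\<lambda>(c, s). map (\<lambda>(d, t). (c * d, \<lambda>k. s k + t k)) ds) cs)) x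
     = trig_sum cs x * trig_sum ds x"
proof (induction cs)
  case (Cons a cs)
  obtain c s where a: "a = (c, s)" by force
  have "trig_sum (map (\<lambda>(d, t). (c * d, \<lambda>k. s k + t k)) ds) x = c * cis (proj s x) * trig_sum ds x"
    by (induction ds) (auto simp: trig_sum_Cons proj_add_dir cis_mult[symmetric] algebra_simps)
  then show ?case
    using Cons.IH by (simp add: a trig_sum_append trig_sum_Cons algebra_simps)
qed simp

lemma trig_polys_const: "(\<lambda>x. c) \<in> trig_polys"
  unfolding trig_polys_def
  by (rule CollectI, rule exI[of _ "[(complex_of_real c, \<lambda>_. 0)]"]) (simp add: trig_sum_def proj_def)

lemma trig_polys_add: "f \<in> trig_polys \<Longrightarrow> g \<in> trig_polys \<Longrightarrow> (\<lambda>x. f x + g x) \<in> trig_polys"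
proof -
  assume "f \<in> trig_polys" "g \<in> trig_polys"
  then obtain cs ds where "f = (\<lambda>x. Re (trig_sum cs x))" and "g = (\<lambda>x. Re (trig_sum ds x))"
    unfolding trig_polys_def by blast
  then have "(\<lambda>x. f x + g x) = (\<lambda>x. Re (trig_sum (cs @ ds) x))" by (simp add: trig_sum_append)
  then show ?thesis unfolding trig_polys_def by blast
qed

text \<open>\<open>Re a \<cdot> Re b = Re (a b) / 2 + Re (a \<cdot> cnj b) / 2\<close>, with the conjugate realized by
  negating the frequencies.\<close>

lemma trig_polys_mult: "f \<in> trig_polys \<Longrightarrow> g \<in> trig_polys \<Longrightarrow> (\<lambda>x. f x * g x) \<in> trig_polys"
proof -
  assume "f \<in> trig_polys" "g \<in> trig_polys"
  then obtain cs ds where f: "f = (\<lambda>x. Re (trig_sum cs x))" and g: "g = (\<lambda>x. Re (trig_sum ds x))"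
    unfolding trig_polys_def by blast
  define prod where "prod cs' ds' = concat (map (\<lambda>(c, s). map (\<lambda>(d, t). (c * d, \<lambda>k. s k + t k)) ds') cs')"
    for cs' ds' :: "(complex \<times> ('a \<Rightarrow> real)) list"
  define es where "es = map (\<lambda>(c, t). ((1/2) * c, t))
    (prod cs ds @ prod cs (map (\<lambda>(c, t). (cnj c, \<lambda>k. - t k)) ds))"
  have "Re (trig_sum es x) = f x * g x" for x
    unfolding es_def prod_def f g trig_sum_scale trig_sum_append trig_sum_mult trig_sum_cnj
    by (simp add: field_simps)
  then show ?thesis unfolding trig_polys_def by (auto intro!: exI[of _ es])
qed

lemma continuous_on_trig_sum: "continuous_on UNIV (trig_sum cs)"
  by (induction cs) (auto simp: trig_sum_Cons proj_def intro!: continuous_intros)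

lemma trig_polys_continuous_on: "f \<in> trig_polys \<Longrightarrow> continuous_on S f"
  unfolding trig_polys_def
  by (auto intro!: continuous_intros continuous_on_subset[OF continuous_on_trig_sum])

lemma trig_polys_bounded: "f \<in> trig_polys \<Longrightarrow> \<exists>K. \<forall>x. \<bar>f x\<bar> \<le> K"
proof -
  have "norm (trig_sum cs x) \<le> (\<Sum>(c, t)\<leftarrow>cs. norm c)" for cs x
    by (induction cs) (auto simp: trig_sum_Cons norm_mult intro!: order_trans[OF norm_triangle_ineq])
  then show "f \<in> trig_polys \<Longrightarrow> \<exists>K. \<forall>x. \<bar>f x\<bar> \<le> K"
    unfolding trig_polys_def using abs_Re_le_cmod order_trans by blast
qed

lemma trig_polys_separating:
  fixes x y :: "real^'p::finite"
  assumes "x \<noteq> y"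
  shows "\<exists>f\<in>trig_polys. f x \<noteq> f y"
proof (rule ccontr)
  assume "\<not> (\<exists>f\<in>trig_polys. f x \<noteq> f y)"
  then have eq: "f x = f y" if "f \<in> trig_polys" for f using that by blast
  define t where "t k = (x - y)$k / (norm (x - y))\<^sup>2" for k
  have "proj t x - proj t y = proj t (x - y)" by (simp add: proj_diff)
  also have "\<dots> = (\<Sum>k\<in>UNIV. ((x - y)$k)\<^sup>2) / (norm (x - y))\<^sup>2"
    unfolding proj_def t_def by (simp add: sum_divide_distrib power2_eq_square)
  also have "\<dots> = 1"
    using assms norm_eq_zero[of "x - y"] by (simp add: norm_vec_def L2_set_def sum_nonneg)
  finally have diff: "proj t x - proj t y = 1" .
  have "(\<lambda>x. Re (trig_sum [(1, t)] x)) \<in> trig_polys" unfolding trig_polys_def by blast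
  from eq[OF this] have "cos (proj t x) = cos (proj t y)" by (simp add: trig_sum_def)
  moreover have "(\<lambda>x. Re (trig_sum [(- \<i>, t)] x)) \<in> trig_polys" unfolding trig_polys_def by blast
  from eq[OF this] have "sin (proj t x) = sin (proj t y)" by (simp add: trig_sum_def)
  ultimately have "sin (proj t x - proj t y) = 0" by (simp add: sin_diff)
  with diff show False using sin_gt_zero[of 1] pi_gt3 by simp
qed

lemma function_ring_on_trig_polys: "function_ring_on trig_polys (cball (0::real^'p::finite) r)"
  by unfold_locales
    (auto intro: trig_polys_continuous_on trig_polys_add trig_polys_mult trig_polys_const trig_polys_separating)

lemma trig_polys_polynomial_comp:
  assumes "polynomial_function q" "P \<in> trig_polys"
  shows "(\<lambda>x. q (P x)) \<in> trig_polys"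
proof -
  have "real_polynomial_function q" using assms(1) by (simp add: real_polynomial_function_eq)
  then show ?thesis
  proof (induction q rule: real_polynomial_function.induct)
    case (linear f)
    then obtain c where "f = (\<lambda>x. x * c)" by (auto simp: real_bounded_linear)
    then show ?case using trig_polys_mult[OF assms(2) trig_polys_const[of c]] by simp
  qed (auto intro: trig_polys_const trig_polys_add trig_polys_mult)
qed

context vanishing_energy
begin

lemma emp_converges_trig_poly: "f \<in> trig_polys \<Longrightarrow> emp_converges f"
proof -
  have "emp_converges (\<lambda>x. Re (trig_sum cs x))" for cs
  proof (induction cs)
    case Nil
    then show ?case using emp_converges_const[of 0] by simp
  next
    case (Cons a cs)
    obtain c t where a: "a = (c, t)" by force
    have "emp_converges (\<lambda>x. (Re c * cos (proj t x) + (- Im c) * sin (proj t x)) + Re (trig_sum cs x))"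
      by (intro emp_converges_add emp_converges_cmult emp_converges_cos_proj emp_converges_sin_proj Cons.IH)
    then show ?case by (simp add: a trig_sum_Cons cis.ctr)
  qed
  then show "f \<in> trig_polys \<Longrightarrow> emp_converges f" unfolding trig_polys_def by blast
qed

text \<open>Stone-Weierstrass gives a trigonometric polynomial \<open>P\<close> close to \<open>f\<close> on a ball; composing
  with a polynomial approximation of the clamp to \<open>[-B, B]\<close> on the range of \<open>P\<close> keeps it
  globally bounded.\<close>

lemma emp_converges_bounded_continuous:
  fixes f :: "real^'p \<Rightarrow> real"
  assumes f_cont: "continuous_on UNIV f" and f_bound: "\<And>x. \<bar>f x\<bar> \<le> B"
  shows "emp_converges f"
proof (rule emp_converges_of_approx[where B="B + 1"])
  have [measurable]: "f \<in> borel_measurable M"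
    by (subst measurable_cong_sets[OF sets_M refl]) (rule borel_measurable_continuous_onI[OF f_cont])
  show "integrable M f" by (rule integrable_const_bound[where B=B]) (auto simp: f_bound)
  show "\<bar>f x\<bar> \<le> B + 1" for x using f_bound[of x] by simp
  fix \<epsilon> \<rho> :: real
  assume \<epsilon>: "0 < \<epsilon>"
  define e where "e = min \<epsilon> 1 / 2"
  have e: "0 < e" "e \<le> 1/2" "2 * e \<le> \<epsilon>" unfolding e_def using \<epsilon> by auto
  obtain P where P: "P \<in> trig_polys" "\<And>x. x \<in> cball 0 \<rho> \<Longrightarrow> \<bar>f x - P x\<bar> < e"
    using function_ring_on.Stone_Weierstrass_basic[OF function_ring_on_trig_polys[of \<rho>], of f e]
      e(1) continuous_on_subset[OF f_cont] by blast
  obtain K where K: "\<And>x. \<bar>P x\<bar> \<le> K" using trig_polys_bounded[OF P(1)] by blast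
  define clamp where "clamp s = max (-B) (min B s)" for s
  have "continuous_on {-K..K} clamp" unfolding clamp_def by (intro continuous_intros)
  then obtain q where q: "polynomial_function q" "\<And>s. s \<in> {-K..K} \<Longrightarrow> \<bar>clamp s - q s\<bar> < e"
    using Stone_Weierstrass_polynomial_function[OF compact_Icc _ e(1)] by fastforce
  have B: "0 \<le> B" using f_bound[of 0] by simp
  have clamp_bound: "\<bar>clamp s\<bar> \<le> B" for s unfolding clamp_def using B by auto
  have q_P: "\<bar>clamp (P x) - q (P x)\<bar> < e" for x
    using K[of x] q(2) by (simp add: abs_le_iff)
  have "emp_converges (\<lambda>x. q (P x))"
    by (rule emp_converges_trig_poly[OF trig_polys_polynomial_comp[OF q(1) P(1)]])
  moreover have "\<bar>q (P x)\<bar> \<le> B + 1" for x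
    using q_P[of x] clamp_bound[of "P x"] e by linarith
  moreover have "\<bar>q (P x) - f x\<bar> \<le> \<epsilon>" if "norm x \<le> \<rho>" for x
  proof -
    have "clamp (f x) = f x" using f_bound[of x] by (simp add: clamp_def abs_le_iff)
    moreover have "\<bar>clamp a - clamp b\<bar> \<le> \<bar>a - b\<bar>" for a b
      unfolding clamp_def by (simp add: max_def min_def abs_if)
    ultimately have "\<bar>clamp (P x) - f x\<bar> \<le> \<bar>P x - f x\<bar>" by metis
    moreover have "\<bar>f x - P x\<bar> < e" using P(2)[of x] that by simp
    ultimately show ?thesis using q_P[of x] e by (simp add: abs_minus_commute)
  qed
  ultimately show "\<exists>g. emp_converges g \<and> (\<forall>x. \<bar>g x\<bar> \<le> B + 1) \<and> (\<forall>x. norm x \<le> \<rho> \<longrightarrow> \<bar>g x - f x\<bar> \<le> \<epsilon>)"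
    by blast
qed

theorem conv_distr_empirical: "conv_distr (\<lambda>n. empirical_distr n (xs n)) M"
  unfolding conv_distr_def
proof (intro allI impI)
  fix f :: "real^'p \<Rightarrow> real"
  assume f: "continuous_on UNIV f \<and> bounded (range f)"
  then obtain B where "\<And>x. \<bar>f x\<bar> \<le> B" by (auto simp: bounded_iff)
  with f have "(\<lambda>n. (\<Sum>i<n. f (xs n i)) / real n) \<longlonglongrightarrow> (\<integral>x. f x \<partial>M)"
    using emp_converges_bounded_continuous unfolding emp_converges_def by blast
  moreover have "\<forall>\<^sub>F n in sequentially. (\<Sum>i<n. f (xs n i)) / real n = (\<integral>x. f x \<partial>empirical_distr n (xs n))"
    using eventually_ge_at_top[of 1] by eventually_elim (simp add: integral_empirical_distr)
  ultimately show "(\<lambda>n. \<integral>x. f x \<partial>empirical_distr n (xs n)) \<longlonglongrightarrow> (\<integral>x. f x \<partial>M)"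
    by (rule Lim_transform_eventually)
qed

end

theorem theorem2:
  fixes M :: "(real^'p) measure" and X :: "(real^'p) set" and \<xi> :: "nat \<Rightarrow> nat \<Rightarrow> real^'p"
  assumes "prob_space M"
    and "sets M = sets borel"
    and "X \<noteq> {}"
    and "AE x in M. x \<in> X"
    and "continuous_on UNIV (cdf_vec M)"
    and "integrable M norm"
    and "\<And>n. n \<ge> 1 \<Longrightarrow> support_points M X n (\<xi> n)"
  shows "conv_distr (\<lambda>n. empirical_distr n (\<xi> n)) M"
proof -
  interpret finite_mean_distribution M
    by (rule finite_mean_distribution.intro[OF assms(1,2,6)])
  interpret vanishing_energy M \<xi>
    by unfold_locales (rule support_points_energy_tendsto_0[OF assms(4,7)])
  show ?thesis by (rule conv_distr_empirical)
qed

end
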